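(* The isomorphism relation $\cong_{\mathrm{Gr}}$ on the standard Borel space of countable graphs SPB-reduces to each of: the isomorphism relation on countable partial orders; the isomorphism relation on countable semigroups; the isomorphism relation on countable unital rings. That is, for each such class $\mathcal D$ there is a Borel map $f$ from countable graphs (with universe $\mathbb{N}$) to $X_{\mathcal D}$ such that $\Gamma_1\cong\Gamma_2\iff f(\Gamma_1)\cong f(\Gamma_2)$ and $\mathrm{Aut}(\Gamma)\cong\mathrm{Aut}(f(\Gamma))$ for every graph $\Gamma$.
   Context: For a class $\mathcal D$ of countable structures, $X_{\mathcal D}$ is the standard Borel space of structures in $\mathcal D$ with universe $\mathbb{N}$, with the logic action of $S_\infty$ (the Polish group of permutations of $\mathbb{N}$). A stabilizer-preserving Borel (SPB) reduction between the isomorphism relations is a Borel reduction $f$ of isomorphism to isomorphism such that the automorphism group of each $x$ is isomorphic to the automorphism group of $f(x)$. *)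

theory Defs
  imports "HOL-Probability.Probability" "HOL-Algebra.Group"
begin

text \<open>The coding space carries the product sigma-algebra of discrete countable
  factors, i.e. the Borel sigma-algebra of the Polish product topology.\<close>

definition code_space :: "('a \<Rightarrow> 'b) measure" where
  "code_space = PiM UNIV (\<lambda>_. count_space UNIV)"

definition ring_code_space :: "((nat \<times> nat \<Rightarrow> nat) \<times> (nat \<times> nat \<Rightarrow> nat)) measure" where
  "ring_code_space = code_space \<Otimes>\<^sub>M code_space"

definition graphs :: "(nat \<times> nat \<Rightarrow> bool) set" where
  "graphs = {E. \<forall>i j. (E (i, j) \<longleftrightarrow> E (j, i)) \<and> \<not> E (i, i)}"

definition partial_orders :: "(nat \<times> nat \<Rightarrow> bool) set" where
  "partial_orders = {R. (\<forall>i. R (i, i)) \<and> (\<forall>i j. R (i, j) \<and> R (j, i) \<longrightarrow> i = j)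
      \<and> (\<forall>i j k. R (i, j) \<and> R (j, k) \<longrightarrow> R (i, k))}"

definition semigroups :: "(nat \<times> nat \<Rightarrow> nat) set" where
  "semigroups = {m. \<forall>a b c. m (m (a, b), c) = m (a, m (b, c))}"

text \<open>Unital rings, coded by (addition, multiplication); zero, one and negation
  are determined by these operations.\<close>
definition unital_rings :: "((nat \<times> nat \<Rightarrow> nat) \<times> (nat \<times> nat \<Rightarrow> nat)) set" where
  "unital_rings = {(p, m).
      (\<forall>a b c. p (p (a, b), c) = p (a, p (b, c))) \<and>
      (\<forall>a b. p (a, b) = p (b, a)) \<and>
      (\<exists>z. (\<forall>a. p (z, a) = a) \<and> (\<forall>a. \<exists>b. p (a, b) = z)) \<and>
      (\<forall>a b c. m (m (a, b), c) = m (a, m (b, c))) \<and>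
      (\<exists>u. \<forall>a. m (u, a) = a \<and> m (a, u) = a) \<and>
      (\<forall>a b c. m (a, p (b, c)) = p (m (a, b), m (a, c))) \<and>
      (\<forall>a b c. m (p (a, b), c) = p (m (a, c), m (b, c)))}"

definition rel_preserving :: "(nat \<times> nat \<Rightarrow> bool) \<Rightarrow> (nat \<times> nat \<Rightarrow> bool) \<Rightarrow> (nat \<Rightarrow> nat) \<Rightarrow> bool" where
  "rel_preserving R S \<pi> \<longleftrightarrow> bij \<pi> \<and> (\<forall>i j. R (i, j) \<longleftrightarrow> S (\<pi> i, \<pi> j))"

definition op_preserving :: "(nat \<times> nat \<Rightarrow> nat) \<Rightarrow> (nat \<times> nat \<Rightarrow> nat) \<Rightarrow> (nat \<Rightarrow> nat) \<Rightarrow> bool" where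
  "op_preserving m n \<pi> \<longleftrightarrow> bij \<pi> \<and> (\<forall>a b. \<pi> (m (a, b)) = n (\<pi> a, \<pi> b))"

definition ring_preserving ::
  "((nat \<times> nat \<Rightarrow> nat) \<times> (nat \<times> nat \<Rightarrow> nat)) \<Rightarrow> ((nat \<times> nat \<Rightarrow> nat) \<times> (nat \<times> nat \<Rightarrow> nat)) \<Rightarrow> (nat \<Rightarrow> nat) \<Rightarrow> bool" where
  "ring_preserving x y \<pi> \<longleftrightarrow> op_preserving (fst x) (fst y) \<pi> \<and> op_preserving (snd x) (snd y) \<pi>"

definition struct_iso :: "('x \<Rightarrow> 'x \<Rightarrow> (nat \<Rightarrow> nat) \<Rightarrow> bool) \<Rightarrow> 'x \<Rightarrow> 'x \<Rightarrow> bool" where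
  "struct_iso P x y \<longleftrightarrow> (\<exists>\<pi>. P x y \<pi>)"

definition aut_group :: "('x \<Rightarrow> 'x \<Rightarrow> (nat \<Rightarrow> nat) \<Rightarrow> bool) \<Rightarrow> 'x \<Rightarrow> (nat \<Rightarrow> nat) monoid" where
  "aut_group P x = \<lparr>carrier = {\<pi>. P x x \<pi>}, mult = (\<circ>), one = id\<rparr>"

definition spb_reduction ::
  "'x measure \<Rightarrow> 'x set \<Rightarrow> ('x \<Rightarrow> 'x \<Rightarrow> (nat \<Rightarrow> nat) \<Rightarrow> bool) \<Rightarrow>
   'y measure \<Rightarrow> 'y set \<Rightarrow> ('y \<Rightarrow> 'y \<Rightarrow> (nat \<Rightarrow> nat) \<Rightarrow> bool) \<Rightarrow> ('x \<Rightarrow> 'y) \<Rightarrow> bool" where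
  "spb_reduction M A P N B Q f \<longleftrightarrow>
     f \<in> measurable (restrict_space M A) (restrict_space N B) \<and>
     (\<forall>x\<in>A. \<forall>y\<in>A. struct_iso P x y \<longleftrightarrow> struct_iso Q (f x) (f y)) \<and>
     (\<forall>x\<in>A. aut_group P x \<cong> aut_group Q (f x))"

end

theory Submission
  imports Defs "HOL-Library.Countable" "HOL-Library.Function_Algebras"
begin

text \<open>Each reduction sends a graph to a structure in which the vertices, and the edge relation
  between them, are definable. Then every isomorphism of the codes is induced by a unique
  isomorphism of the graphs, compatibly with composition, so isomorphism is reflected and the
  automorphism groups agree.

  For partial orders, the vertices are the atoms of a poset built from bottom, vertex atoms,
  markers above them and nodes for pairs of vertices; an edge is recorded by the pair node lying
  above the markers. This poset is a meet semilattice, and meet semilattice isomorphisms are exactly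
  the order isomorphisms, which gives semigroups. For unital rings, take the ring of integer
  matrices indexed by pairs of vertices that are constant modulo 2 along rows, symmetric modulo 3,
  and symmetric modulo 5 at the edges. The minimal solutions of \<open>h\<^sup>2 = 30 h\<close> are the matrices
  with a single entry 30, so ring isomorphisms permute the matrix positions, and the congruences
  that hold throughout the ring recover rows, transposition and the edges.

  The maps are Borel because each value of the coded order or meet depends on at most two edges,
  while the ring is enumerated by least-number searches over a fixed enumeration of a countable
  superset.\<close>

section \<open>Lifting isomorphisms\<close>

lemma spb_reduction_by_lift:
  fixes lift :: "'x \<Rightarrow> 'x \<Rightarrow> (nat \<Rightarrow> nat) \<Rightarrow> nat \<Rightarrow> nat"
  assumes f_measurable: "f \<in> measurable (restrict_space M A) (restrict_space N B)"
    and lift_iso: "\<And>x y \<pi>. x \<in> A \<Longrightarrow> y \<in> A \<Longrightarrow> P x y \<pi> \<Longrightarrow> Q (f x) (f y) (lift x y \<pi>)"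
    and iso_is_lift: "\<And>x y \<psi>. x \<in> A \<Longrightarrow> y \<in> A \<Longrightarrow> Q (f x) (f y) \<psi> \<Longrightarrow> \<exists>\<pi>. P x y \<pi> \<and> \<psi> = lift x y \<pi>"
    and lift_comp: "\<And>x \<pi> \<rho>. x \<in> A \<Longrightarrow> P x x \<pi> \<Longrightarrow> P x x \<rho> \<Longrightarrow> lift x x (\<pi> \<circ> \<rho>) = lift x x \<pi> \<circ> lift x x \<rho>"
    and lift_inj: "\<And>x \<pi> \<rho>. x \<in> A \<Longrightarrow> P x x \<pi> \<Longrightarrow> P x x \<rho> \<Longrightarrow> lift x x \<pi> = lift x x \<rho> \<Longrightarrow> \<pi> = \<rho>"
  shows "spb_reduction M A P N B Q f"
  unfolding spb_reduction_def
proof (intro conjI ballI f_measurable)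
  fix x y assume "x \<in> A" "y \<in> A"
  then show "struct_iso P x y \<longleftrightarrow> struct_iso Q (f x) (f y)"
    unfolding struct_iso_def using lift_iso iso_is_lift by blast
next
  fix x assume x: "x \<in> A"
  have "bij_betw (lift x x) {\<pi>. P x x \<pi>} {\<psi>. Q (f x) (f x) \<psi>}"
    unfolding bij_betw_def inj_on_def using lift_iso[OF x x] iso_is_lift[OF x x] lift_inj[OF x] by auto
  then have "lift x x \<in> iso (aut_group P x) (aut_group Q (f x))"
    using lift_comp[OF x] by (auto simp: iso_def hom_def aut_group_def bij_betw_def)
  then show "aut_group P x \<cong> aut_group Q (f x)"
    by (rule is_isoI)
qed

section \<open>Borel maps into the coding space\<close>

lemma measurable_restrict_space_image:
  assumes "f \<in> measurable M N" and "f ` A \<subseteq> B"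
  shows "f \<in> measurable (restrict_space M A) (restrict_space N B)"
  using assms by (intro measurable_restrict_space2 measurable_restrict_space1)
    (auto simp: space_restrict_space)

lemma measurable_code_spaceI:
  assumes "\<And>i. (\<lambda>x. F x i) \<in> measurable M (count_space UNIV)"
  shows "F \<in> measurable M code_space"
  unfolding code_space_def by (rule measurable_PiM_single') (use assms in auto)

lemma measurable_code_space_coordinate: "(\<lambda>x. x i) \<in> measurable code_space (count_space UNIV)"
  unfolding code_space_def by (rule measurable_component_singleton) simp

lemma measurable_finitely_determined:
  fixes F :: "('a \<Rightarrow> bool) \<Rightarrow> 'c::countable"
  assumes K: "finite K" and determined: "\<And>x y. \<forall>k\<in>K. x k = y k \<Longrightarrow> F x = F y"
  shows "F \<in> measurable code_space (count_space UNIV)"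
proof -
  define cylinder where "cylinder p = {x \<in> space code_space. \<forall>k\<in>K. x k = p k}" for p :: "'a \<Rightarrow> bool"
  have cylinder_sets: "cylinder p \<in> sets code_space" for p
  proof -
    note [measurable] = measurable_code_space_coordinate
    have "Measurable.pred code_space (\<lambda>x. \<forall>k\<in>K. x k = p k)" using K by measurable
    then show ?thesis unfolding cylinder_def by measurable
  qed
  have "F -` {c} \<inter> space code_space \<in> sets code_space" for c
  proof -
    define P where "P = {p \<in> (\<lambda>S k. k \<in> S) ` Pow K. F p = c}"
    have "F -` {c} \<inter> space code_space = (\<Union>p\<in>P. cylinder p)"
    proof (intro Set.set_eqI iffI)
      fix x assume x: "x \<in> F -` {c} \<inter> space code_space"
      define p where "p = (\<lambda>k. k \<in> {k \<in> K. x k})"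
      have "\<forall>k\<in>K. x k = p k" by (simp add: p_def)
      moreover have "p \<in> (\<lambda>S k. k \<in> S) ` Pow K" unfolding p_def by blast
      ultimately have "p \<in> P" unfolding P_def using determined x by auto
      with \<open>\<forall>k\<in>K. x k = p k\<close> show "x \<in> (\<Union>p\<in>P. cylinder p)" using x unfolding cylinder_def by blast
    next
      fix x assume "x \<in> (\<Union>p\<in>P. cylinder p)"
      then obtain p where "p \<in> P" "\<forall>k\<in>K. x k = p k" "x \<in> space code_space"
        unfolding cylinder_def by blast
      then show "x \<in> F -` {c} \<inter> space code_space" using determined unfolding P_def by auto
    qed
    moreover have "finite P" unfolding P_def using K by simp
    ultimately show ?thesis using cylinder_sets by (auto intro: sets.finite_UN)
  qed
  then show ?thesis by (subst measurable_count_space_eq_countable) auto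
qed

lemma rel_preserving_inj: "rel_preserving R S \<pi> \<Longrightarrow> inj \<pi>"
  by (simp add: rel_preserving_def bij_is_inj)

lemma graph_sym: "E \<in> graphs \<Longrightarrow> E (i, j) = E (j, i)"
  by (simp add: graphs_def)

lemma graph_irrefl: "E \<in> graphs \<Longrightarrow> \<not> E (i, i)"
  by (simp add: graphs_def)

section \<open>The poset of a graph\<close>

datatype gnode = Bot | Vert nat | Mark nat | Link nat nat

instance gnode :: countable by countable_datatype

definition graph_nodes :: "gnode set" where
  "graph_nodes = {Bot} \<union> range Vert \<union> range Mark \<union> {Link i j | i j. i < j}"

lemma graph_nodes_simps [simp]:
  "Bot \<in> graph_nodes" "Vert i \<in> graph_nodes" "Mark i \<in> graph_nodes"
  "Link i j \<in> graph_nodes \<longleftrightarrow> i < j"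
  by (auto simp: graph_nodes_def)

lemma infinite_graph_nodes: "infinite graph_nodes"
proof
  assume "finite graph_nodes"
  then have "finite (range Vert)" by (rule finite_subset[rotated]) auto
  then show False using finite_imageD[of Vert UNIV] by (simp add: inj_def)
qed

definition node_of :: "nat \<Rightarrow> gnode" where
  "node_of = from_nat_into graph_nodes"

definition node_index :: "gnode \<Rightarrow> nat" where
  "node_index = inv_into UNIV node_of"

lemma bij_betw_node_of: "bij_betw node_of UNIV graph_nodes"
  unfolding node_of_def by (rule bij_betw_from_nat_into) (auto simp: infinite_graph_nodes)

lemma bij_betw_node_index: "bij_betw node_index graph_nodes UNIV"
  unfolding node_index_def by (rule bij_betw_inv_into[OF bij_betw_node_of])

lemma node_of_in_graph_nodes [simp]: "node_of n \<in> graph_nodes"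
  using bij_betw_node_of bij_betwE by blast

lemma node_of_index [simp]: "a \<in> graph_nodes \<Longrightarrow> node_of (node_index a) = a"
  unfolding node_index_def using bij_betw_node_of by (meson bij_betw_inv_into_right)

lemma node_index_of [simp]: "node_index (node_of n) = n"
  unfolding node_index_def using bij_betw_node_of by (simp add: bij_betw_imp_inj_on)

lemma node_of_eq_iff: "node_of n = node_of m \<longleftrightarrow> n = m"
  by (metis node_index_of)

definition node_le :: "(nat \<times> nat \<Rightarrow> bool) \<Rightarrow> gnode \<Rightarrow> gnode \<Rightarrow> bool" where
  "node_le E a b \<longleftrightarrow> a = b \<or> a = Bot
     \<or> (\<exists>i. a = Vert i \<and> (b = Mark i \<or> (\<exists>k. b = Link i k) \<or> (\<exists>k. b = Link k i)))
     \<or> (\<exists>i. a = Mark i \<and> (\<exists>k l. b = Link k l \<and> (i = k \<or> i = l) \<and> E (k, l)))"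

lemma node_le_refl: "node_le E a a"
  by (simp add: node_le_def)

lemma node_le_antisym: "node_le E a b \<Longrightarrow> node_le E b a \<Longrightarrow> a = b"
  by (auto simp: node_le_def)

lemma node_le_trans: "node_le E a b \<Longrightarrow> node_le E b c \<Longrightarrow> node_le E a c"
  by (auto simp: node_le_def)

definition graph_poset :: "(nat \<times> nat \<Rightarrow> bool) \<Rightarrow> nat \<times> nat \<Rightarrow> bool" where
  "graph_poset E = (\<lambda>(n, m). node_le E (node_of n) (node_of m))"

lemma graph_poset_in_partial_orders: "graph_poset E \<in> partial_orders"
  unfolding partial_orders_def graph_poset_def
  by (auto intro: node_le_refl node_le_trans dest: node_le_antisym simp: node_of_eq_iff)

fun map_node :: "(nat \<Rightarrow> nat) \<Rightarrow> gnode \<Rightarrow> gnode" where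
  "map_node \<pi> Bot = Bot"
| "map_node \<pi> (Vert i) = Vert (\<pi> i)"
| "map_node \<pi> (Mark i) = Mark (\<pi> i)"
| "map_node \<pi> (Link i j) = Link (min (\<pi> i) (\<pi> j)) (max (\<pi> i) (\<pi> j))"

lemma map_node_comp: "map_node (\<pi> \<circ> \<rho>) a = map_node \<pi> (map_node \<rho> a)"
  by (cases a) (auto simp: min_def max_def)

lemma map_node_in_graph_nodes: "inj \<pi> \<Longrightarrow> a \<in> graph_nodes \<Longrightarrow> map_node \<pi> a \<in> graph_nodes"
  by (cases a) (auto simp: graph_nodes_def min_def max_def inj_eq)

lemma map_node_inv: "bij \<pi> \<Longrightarrow> a \<in> graph_nodes \<Longrightarrow> map_node (inv_into UNIV \<pi>) (map_node \<pi> a) = a"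
  by (cases a) (auto simp: min_def max_def bij_is_inj)

lemma bij_betw_map_node: "bij \<pi> \<Longrightarrow> bij_betw (map_node \<pi>) graph_nodes graph_nodes"
proof (rule bij_betw_byWitness[where f'="map_node (inv_into UNIV \<pi>)"])
  assume "bij \<pi>"
  then have "bij (inv_into UNIV \<pi>)" and "inv_into UNIV (inv_into UNIV \<pi>) = \<pi>"
    by (simp_all add: bij_imp_bij_inv inv_inv_eq)
  then show "\<forall>a\<in>graph_nodes. map_node \<pi> (map_node (inv_into UNIV \<pi>) a) = a"
    using map_node_inv by metis
  show "\<forall>a\<in>graph_nodes. map_node (inv_into UNIV \<pi>) (map_node \<pi> a) = a"
    using map_node_inv \<open>bij \<pi>\<close> by blast
  show "map_node \<pi> ` graph_nodes \<subseteq> graph_nodes" "map_node (inv_into UNIV \<pi>) ` graph_nodes \<subseteq> graph_nodes"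
    using map_node_in_graph_nodes \<open>bij \<pi>\<close> \<open>bij (inv_into UNIV \<pi>)\<close> bij_is_inj by blast+
qed

lemma node_le_map_node_iff:
  assumes "bij \<pi>" and iso: "\<forall>i j. E1 (i, j) \<longleftrightarrow> E2 (\<pi> i, \<pi> j)" and "E2 \<in> graphs"
    and "a \<in> graph_nodes" "b \<in> graph_nodes"
  shows "node_le E2 (map_node \<pi> a) (map_node \<pi> b) \<longleftrightarrow> node_le E1 a b"
proof -
  have inj: "\<pi> x = \<pi> y \<longleftrightarrow> x = y" for x y using \<open>bij \<pi>\<close> by (simp add: bij_is_inj inj_eq)
  have sym: "E2 (x, y) = E2 (y, x)" for x y using graph_sym[OF \<open>E2 \<in> graphs\<close>] by blast
  show ?thesis using assms(4,5)
    by (cases a; cases b) (auto simp: node_le_def graph_nodes_def inj iso min_def max_def, (metis sym)+)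
qed

definition atom_over :: "'a set \<Rightarrow> ('a \<Rightarrow> 'a \<Rightarrow> bool) \<Rightarrow> 'a \<Rightarrow> 'a \<Rightarrow> bool" where
  "atom_over S R z a \<longleftrightarrow> a \<in> S \<and> a \<noteq> z \<and> (\<forall>b\<in>S. R b a \<longrightarrow> b = a \<or> b = z)"

lemma order_iso_least:
  assumes "bij_betw \<Psi> S T" and iso: "\<And>a b. a \<in> S \<Longrightarrow> b \<in> S \<Longrightarrow> R a b \<longleftrightarrow> R' (\<Psi> a) (\<Psi> b)"
    and "z \<in> S" "\<forall>a\<in>S. R z a" and "\<forall>b\<in>T. R' z' b" "z' \<in> T"
    and antisym: "\<And>a b. R' a b \<Longrightarrow> R' b a \<Longrightarrow> a = b"
  shows "\<Psi> z = z'"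
proof -
  obtain b where "b \<in> S" "z' = \<Psi> b"
    using \<open>z' \<in> T\<close> \<open>bij_betw \<Psi> S T\<close> by (auto simp: bij_betw_def)
  then have "R' (\<Psi> z) z'" using iso \<open>z \<in> S\<close> \<open>\<forall>a\<in>S. R z a\<close> by blast
  moreover have "R' z' (\<Psi> z)"
    using \<open>\<forall>b\<in>T. R' z' b\<close> \<open>z \<in> S\<close> \<open>bij_betw \<Psi> S T\<close> bij_betwE by blast
  ultimately show ?thesis using antisym by blast
qed

lemma order_iso_atom_over_iff:
  assumes bij: "bij_betw \<Psi> S T" and iso: "\<And>a b. a \<in> S \<Longrightarrow> b \<in> S \<Longrightarrow> R a b \<longleftrightarrow> R' (\<Psi> a) (\<Psi> b)"
    and "a \<in> S" "z \<in> S"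
  shows "atom_over T R' (\<Psi> z) (\<Psi> a) \<longleftrightarrow> atom_over S R z a"
proof -
  have "(\<forall>c\<in>T. R' c (\<Psi> a) \<longrightarrow> c = \<Psi> a \<or> c = \<Psi> z)
      \<longleftrightarrow> (\<forall>b\<in>S. R' (\<Psi> b) (\<Psi> a) \<longrightarrow> \<Psi> b = \<Psi> a \<or> \<Psi> b = \<Psi> z)"
    using bij by (auto simp: bij_betw_def)
  also have "\<dots> \<longleftrightarrow> (\<forall>b\<in>S. R b a \<longrightarrow> b = a \<or> b = z)"
    using iso \<open>a \<in> S\<close> \<open>z \<in> S\<close> bij by (auto simp: bij_betw_def inj_on_eq_iff)
  finally show ?thesis
    unfolding atom_over_def using assms by (auto simp: bij_betw_def inj_on_eq_iff)
qed

lemma atom_over_node_le_iff: "atom_over graph_nodes (node_le E) Bot a \<longleftrightarrow> (\<exists>i. a = Vert i)"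
proof
  assume atom: "atom_over graph_nodes (node_le E) Bot a"
  then have below: "b \<in> graph_nodes \<Longrightarrow> node_le E b a \<Longrightarrow> b = a \<or> b = Bot" for b
    by (auto simp: atom_over_def)
  show "\<exists>i. a = Vert i"
  proof (cases a)
    case (Mark i) then show ?thesis using below[of "Vert i"] by (auto simp: node_le_def)
  next
    case (Link k l) then show ?thesis using below[of "Vert k"] by (auto simp: node_le_def)
  qed (use atom in \<open>auto simp: atom_over_def\<close>)
qed (auto simp: atom_over_def node_le_def graph_nodes_def)

lemma Mark_unique_over_Vert:
  "w \<in> graph_nodes \<Longrightarrow>
    (node_le E (Vert i) w \<and> w \<noteq> Vert i \<and> (\<forall>j. node_le E (Vert j) w \<longrightarrow> j = i)) \<longleftrightarrow> w = Mark i"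
  by (auto simp: graph_nodes_def node_le_def)

lemma Link_unique_over_Vert:
  "q \<in> graph_nodes \<Longrightarrow> node_le E (Vert a) q \<Longrightarrow> node_le E (Vert b) q \<Longrightarrow> a \<noteq> b
    \<Longrightarrow> q = Link (min a b) (max a b)"
  by (auto simp: graph_nodes_def node_le_def min_def max_def)

lemma Mark_le_Link_iff: "k < l \<Longrightarrow> node_le E (Mark k) (Link k l) \<longleftrightarrow> E (k, l)"
  by (auto simp: node_le_def)

locale node_order_iso =
  fixes E1 E2 :: "nat \<times> nat \<Rightarrow> bool" and \<Psi> :: "gnode \<Rightarrow> gnode"
  assumes graphs: "E1 \<in> graphs" "E2 \<in> graphs"
    and bij: "bij_betw \<Psi> graph_nodes graph_nodes"
    and le_iff: "\<And>a b. a \<in> graph_nodes \<Longrightarrow> b \<in> graph_nodes \<Longrightarrow> node_le E1 a b \<longleftrightarrow> node_le E2 (\<Psi> a) (\<Psi> b)"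
begin

definition vertex_perm :: "nat \<Rightarrow> nat" where
  "vertex_perm i = (SOME j. \<Psi> (Vert i) = Vert j)"

lemma in_graph_nodes: "a \<in> graph_nodes \<Longrightarrow> \<Psi> a \<in> graph_nodes"
  using bij bij_betwE by blast

lemma eq_iff: "a \<in> graph_nodes \<Longrightarrow> b \<in> graph_nodes \<Longrightarrow> \<Psi> a = \<Psi> b \<longleftrightarrow> a = b"
  using bij by (auto simp: bij_betw_def inj_on_def)

lemma maps_Bot: "\<Psi> Bot = Bot"
  by (rule order_iso_least[where R="node_le E1" and R'="node_le E2", OF bij le_iff])
    (auto simp: node_le_def intro: node_le_antisym)

lemma atom_iff: "a \<in> graph_nodes \<Longrightarrow> (\<exists>j. \<Psi> a = Vert j) \<longleftrightarrow> (\<exists>i. a = Vert i)"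
  using order_iso_atom_over_iff[where R="node_le E1" and R'="node_le E2", OF bij le_iff, of a Bot]
  by (simp add: maps_Bot atom_over_node_le_iff)

lemma maps_Vert: "\<Psi> (Vert i) = Vert (vertex_perm i)"
proof -
  obtain j where "\<Psi> (Vert i) = Vert j" using atom_iff[of "Vert i"] by auto
  then show ?thesis unfolding vertex_perm_def by (rule someI)
qed

lemma bij_vertex_perm: "bij vertex_perm"
proof (rule bijI)
  show "inj vertex_perm"
    by (rule injI) (metis maps_Vert eq_iff graph_nodes_simps(2) gnode.inject(1))
  show "surj vertex_perm"
  proof (rule surj_def[THEN iffD2, rule_format])
    fix j
    obtain b where b: "b \<in> graph_nodes" "\<Psi> b = Vert j"
      using bij graph_nodes_simps(2) by (metis bij_betw_iff_bijections)
    then obtain i where "b = Vert i" using atom_iff by metis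
    then show "\<exists>i. j = vertex_perm i" using b maps_Vert by auto
  qed
qed

lemma maps_Mark: "\<Psi> (Mark i) = Mark (vertex_perm i)"
proof -
  have "node_le E2 (Vert (vertex_perm i)) (\<Psi> (Mark i))"
    using le_iff[of "Vert i" "Mark i"] maps_Vert by (simp add: node_le_def)
  moreover have "\<Psi> (Mark i) \<noteq> Vert (vertex_perm i)"
    using maps_Vert eq_iff[of "Mark i" "Vert i"] by auto
  moreover have "j = vertex_perm i" if "node_le E2 (Vert j) (\<Psi> (Mark i))" for j
  proof -
    obtain j' where "j = vertex_perm j'" using bij_vertex_perm by (metis bij_pointE)
    then have "node_le E1 (Vert j') (Mark i)" using le_iff[of "Vert j'" "Mark i"] that maps_Vert by simp
    then show ?thesis using \<open>j = vertex_perm j'\<close> by (simp add: node_le_def)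
  qed
  ultimately show ?thesis using Mark_unique_over_Vert[OF in_graph_nodes[OF graph_nodes_simps(3)]] by blast
qed

lemma maps_Link:
  assumes "k < l"
  shows "\<Psi> (Link k l) = Link (min (vertex_perm k) (vertex_perm l)) (max (vertex_perm k) (vertex_perm l))"
proof (rule Link_unique_over_Vert[OF in_graph_nodes])
  show "Link k l \<in> graph_nodes" using assms by simp
  show "node_le E2 (Vert (vertex_perm k)) (\<Psi> (Link k l))" "node_le E2 (Vert (vertex_perm l)) (\<Psi> (Link k l))"
    using le_iff[of "Vert k" "Link k l"] le_iff[of "Vert l" "Link k l"] assms maps_Vert
    by (simp_all add: node_le_def)
  show "vertex_perm k \<noteq> vertex_perm l"
    using assms bij_vertex_perm by (metis bij_is_inj inj_eq less_irrefl)
qed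

lemma eq_map_node: "a \<in> graph_nodes \<Longrightarrow> \<Psi> a = map_node vertex_perm a"
  by (cases a) (auto simp: maps_Bot maps_Vert maps_Mark maps_Link)

lemma edge_iff_less:
  assumes "i < j"
  shows "E1 (i, j) \<longleftrightarrow> E2 (vertex_perm i, vertex_perm j)"
proof -
  have "map_node vertex_perm (Link i j) \<in> graph_nodes"
    using assms bij_vertex_perm bij_is_inj map_node_in_graph_nodes by (metis graph_nodes_simps(4))
  then have "min (vertex_perm i) (vertex_perm j) < max (vertex_perm i) (vertex_perm j)" by simp
  moreover have "E1 (i, j) \<longleftrightarrow> node_le E2 (Mark (vertex_perm i)) (\<Psi> (Link i j))"
    using le_iff[of "Mark i" "Link i j"] Mark_le_Link_iff[OF assms] assms maps_Mark by simp
  ultimately show ?thesis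
    using maps_Link[OF assms] graph_sym[OF graphs(2)]
    by (auto simp: node_le_def min_def max_def split: if_splits)
qed

lemma edge_iff: "E1 (i, j) \<longleftrightarrow> E2 (vertex_perm i, vertex_perm j)"
proof (cases i j rule: linorder_cases)
  case less then show ?thesis by (rule edge_iff_less)
next
  case equal then show ?thesis using graph_irrefl graphs by blast
next
  case greater
  then show ?thesis using edge_iff_less graph_sym[OF graphs(1)] graph_sym[OF graphs(2)] by blast
qed

end

lemma node_order_iso_is_map_node:
  assumes "E1 \<in> graphs" "E2 \<in> graphs" "bij_betw \<Psi> graph_nodes graph_nodes"
    and "\<And>a b. a \<in> graph_nodes \<Longrightarrow> b \<in> graph_nodes \<Longrightarrow> node_le E1 a b \<longleftrightarrow> node_le E2 (\<Psi> a) (\<Psi> b)"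
  shows "\<exists>\<pi>. rel_preserving E1 E2 \<pi> \<and> (\<forall>a\<in>graph_nodes. \<Psi> a = map_node \<pi> a)"
proof -
  interpret node_order_iso E1 E2 \<Psi> using assms by unfold_locales
  show ?thesis
    using bij_vertex_perm edge_iff eq_map_node unfolding rel_preserving_def by blast
qed

definition node_lift :: "(nat \<Rightarrow> nat) \<Rightarrow> nat \<Rightarrow> nat" where
  "node_lift \<pi> = node_index \<circ> map_node \<pi> \<circ> node_of"

lemma bij_node_lift: "bij \<pi> \<Longrightarrow> bij (node_lift \<pi>)"
  unfolding node_lift_def
  by (rule bij_betw_trans[OF bij_betw_node_of bij_betw_trans[OF bij_betw_map_node bij_betw_node_index]])

lemma graph_poset_node_lift:
  assumes "y \<in> graphs" and "rel_preserving x y \<pi>"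
  shows "rel_preserving (graph_poset x) (graph_poset y) (node_lift \<pi>)"
  unfolding rel_preserving_def
proof (intro conjI allI)
  have "bij \<pi>" and iso: "\<forall>i j. x (i, j) = y (\<pi> i, \<pi> j)"
    using assms(2) by (auto simp: rel_preserving_def)
  show "bij (node_lift \<pi>)" using \<open>bij \<pi>\<close> by (rule bij_node_lift)
  fix n m
  have "map_node \<pi> (node_of k) \<in> graph_nodes" for k
    using map_node_in_graph_nodes \<open>bij \<pi>\<close> bij_is_inj node_of_in_graph_nodes by blast
  then have "graph_poset y (node_lift \<pi> n, node_lift \<pi> m)
      = node_le y (map_node \<pi> (node_of n)) (map_node \<pi> (node_of m))"
    by (simp add: graph_poset_def node_lift_def)
  also have "\<dots> = graph_poset x (n, m)"
    using node_le_map_node_iff[OF \<open>bij \<pi>\<close> iso \<open>y \<in> graphs\<close>] by (simp add: graph_poset_def)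
  finally show "graph_poset x (n, m) = graph_poset y (node_lift \<pi> n, node_lift \<pi> m)" ..
qed

lemma graph_poset_iso_is_node_lift:
  assumes "x \<in> graphs" "y \<in> graphs" and "rel_preserving (graph_poset x) (graph_poset y) \<psi>"
  shows "\<exists>\<pi>. rel_preserving x y \<pi> \<and> \<psi> = node_lift \<pi>"
proof -
  define \<Psi> where "\<Psi> = node_of \<circ> \<psi> \<circ> node_index"
  have "bij \<psi>" using assms(3) by (simp add: rel_preserving_def)
  then have "bij_betw \<Psi> graph_nodes graph_nodes" unfolding \<Psi>_def
    by (rule bij_betw_trans[OF bij_betw_node_index bij_betw_trans[OF _ bij_betw_node_of]])
  moreover have "node_le x a b \<longleftrightarrow> node_le y (\<Psi> a) (\<Psi> b)"
    if "a \<in> graph_nodes" "b \<in> graph_nodes" for a b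
  proof -
    have "node_le x a b \<longleftrightarrow> node_le x (node_of (node_index a)) (node_of (node_index b))"
      using that by simp
    then show ?thesis using assms(3) by (simp add: rel_preserving_def graph_poset_def \<Psi>_def)
  qed
  ultimately obtain \<pi> where "rel_preserving x y \<pi>" and \<pi>: "\<forall>a\<in>graph_nodes. \<Psi> a = map_node \<pi> a"
    using node_order_iso_is_map_node[OF assms(1,2)] by blast
  moreover have "\<psi> = node_lift \<pi>"
  proof
    fix n
    have "node_of (\<psi> n) = map_node \<pi> (node_of n)"
      using \<pi>[rule_format, OF node_of_in_graph_nodes[of n]] by (simp add: \<Psi>_def)
    then show "\<psi> n = node_lift \<pi> n" unfolding node_lift_def by (metis comp_apply node_index_of)
  qed
  ultimately show ?thesis by blast
qed

lemma node_lift_comp: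
  assumes "inj \<rho>"
  shows "node_lift (\<pi> \<circ> \<rho>) = node_lift \<pi> \<circ> node_lift \<rho>"
proof
  fix n
  have "map_node \<rho> (node_of n) \<in> graph_nodes"
    using map_node_in_graph_nodes[OF assms] by simp
  then show "node_lift (\<pi> \<circ> \<rho>) n = (node_lift \<pi> \<circ> node_lift \<rho>) n"
    by (simp add: node_lift_def map_node_comp)
qed

lemma node_lift_inj: "node_lift \<pi> = node_lift \<rho> \<Longrightarrow> \<pi> = \<rho>"
proof
  fix i assume "node_lift \<pi> = node_lift \<rho>"
  then have "node_lift \<pi> (node_index (Vert i)) = node_lift \<rho> (node_index (Vert i))" by simp
  then have "node_index (Vert (\<pi> i)) = node_index (Vert (\<rho> i))" by (simp add: node_lift_def)
  then have "node_of (node_index (Vert (\<pi> i))) = node_of (node_index (Vert (\<rho> i)))" by simp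
  then show "\<pi> i = \<rho> i" by simp
qed

section \<open>The meet semigroup of a graph\<close>

definition meet_op :: "(nat \<times> nat \<Rightarrow> bool) \<Rightarrow> (nat \<times> nat \<Rightarrow> nat) \<Rightarrow> bool" where
  "meet_op R M \<longleftrightarrow> (\<forall>i. R (i, i)) \<and> (\<forall>i j. R (i, j) \<and> R (j, i) \<longrightarrow> i = j)
     \<and> (\<forall>i j k. R (i, j) \<and> R (j, k) \<longrightarrow> R (i, k))
     \<and> (\<forall>i j. R (M (i, j), i) \<and> R (M (i, j), j)) \<and> (\<forall>i j k. R (k, i) \<longrightarrow> R (k, j) \<longrightarrow> R (k, M (i, j)))"

lemma meet_opD:
  assumes "meet_op R M"
  shows "R (i, i)" "R (i, j) \<Longrightarrow> R (j, i) \<Longrightarrow> i = j" "R (i, j) \<Longrightarrow> R (j, k) \<Longrightarrow> R (i, k)"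
    "R (M (i, j), i)" "R (M (i, j), j)" "R (k, i) \<Longrightarrow> R (k, j) \<Longrightarrow> R (k, M (i, j))"
  using assms unfolding meet_op_def by blast+

lemma meet_op_le_iff: "meet_op R M \<Longrightarrow> R (i, j) \<longleftrightarrow> M (i, j) = i"
proof
  assume meet: "meet_op R M" and "R (i, j)"
  have "R (i, M (i, j))" using meet_opD(6)[OF meet meet_opD(1)[OF meet] \<open>R (i, j)\<close>] .
  then show "M (i, j) = i" using meet_opD(2)[OF meet] meet_opD(4)[OF meet] by blast
next
  assume "meet_op R M" and "M (i, j) = i"
  then show "R (i, j)" using meet_opD(5)[of R M i j] by simp
qed

lemma meet_op_assoc:
  assumes "meet_op R M"
  shows "M (M (a, b), c) = M (a, M (b, c))"
proof -
  note D = meet_opD[OF assms]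
  define x where "x = M (M (a, b), c)"
  define y where "y = M (a, M (b, c))"
  have x_lower: "R (x, a)" "R (x, b)" "R (x, c)"
    unfolding x_def using D(3)[OF D(4) D(4)] D(3)[OF D(4) D(5)] D(5) by blast+
  have y_lower: "R (y, a)" "R (y, b)" "R (y, c)"
    unfolding y_def using D(4) D(3)[OF D(5) D(4)] D(3)[OF D(5) D(5)] by blast+
  have "R (x, y)" unfolding y_def using D(6)[OF x_lower(1) D(6)[OF x_lower(2,3)]] .
  moreover have "R (y, x)" unfolding x_def using D(6)[OF D(6)[OF y_lower(1,2)] y_lower(3)] .
  ultimately show ?thesis using D(2) x_def y_def by blast
qed

lemma op_preserving_iff_rel_preserving:
  assumes meet1: "meet_op R1 M1" and meet2: "meet_op R2 M2"
  shows "op_preserving M1 M2 \<psi> \<longleftrightarrow> rel_preserving R1 R2 \<psi>"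
proof
  assume "op_preserving M1 M2 \<psi>"
  then have "bij \<psi>" and hom: "\<And>i j. \<psi> (M1 (i, j)) = M2 (\<psi> i, \<psi> j)" by (auto simp: op_preserving_def)
  have "R1 (i, j) \<longleftrightarrow> R2 (\<psi> i, \<psi> j)" for i j
  proof -
    have "R1 (i, j) \<longleftrightarrow> \<psi> (M1 (i, j)) = \<psi> i"
      using meet_op_le_iff[OF meet1] \<open>bij \<psi>\<close> by (simp add: bij_is_inj inj_eq)
    also have "\<dots> \<longleftrightarrow> R2 (\<psi> i, \<psi> j)" using meet_op_le_iff[OF meet2] hom by simp
    finally show ?thesis .
  qed
  with \<open>bij \<psi>\<close> show "rel_preserving R1 R2 \<psi>" by (simp add: rel_preserving_def)
next
  assume "rel_preserving R1 R2 \<psi>"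
  then have "bij \<psi>" and iso: "\<And>i j. R1 (i, j) \<longleftrightarrow> R2 (\<psi> i, \<psi> j)" by (auto simp: rel_preserving_def)
  note D1 = meet_opD[OF meet1] and D2 = meet_opD[OF meet2]
  have "\<psi> (M1 (i, j)) = M2 (\<psi> i, \<psi> j)" for i j
  proof -
    obtain k where k: "\<psi> k = M2 (\<psi> i, \<psi> j)" using \<open>bij \<psi>\<close> by (metis bij_pointE)
    have "R2 (\<psi> k, \<psi> i)" "R2 (\<psi> k, \<psi> j)" using D2(4,5)[of "\<psi> i" "\<psi> j"] k by simp_all
    then have "R1 (k, M1 (i, j))" using iso D1(6) by blast
    then have "R2 (M2 (\<psi> i, \<psi> j), \<psi> (M1 (i, j)))" using iso k by metis
    moreover have "R2 (\<psi> (M1 (i, j)), M2 (\<psi> i, \<psi> j))"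
      using iso D1(4,5)[of i j] D2(6) by blast
    ultimately show ?thesis using D2(2) by blast
  qed
  with \<open>bij \<psi>\<close> show "op_preserving M1 M2 \<psi>" by (simp add: op_preserving_def)
qed

definition node_meet :: "(nat \<times> nat \<Rightarrow> bool) \<Rightarrow> gnode \<Rightarrow> gnode \<Rightarrow> gnode" where
  "node_meet E a b = (if node_le E a b then a else if node_le E b a then b
     else if \<exists>k. node_le E (Mark k) a \<and> node_le E (Mark k) b
       then Mark (SOME k. node_le E (Mark k) a \<and> node_le E (Mark k) b)
     else if \<exists>k. node_le E (Vert k) a \<and> node_le E (Vert k) b
       then Vert (SOME k. node_le E (Vert k) a \<and> node_le E (Vert k) b)
     else Bot)"

lemma node_meet_lower:
  assumes "a \<in> graph_nodes" "b \<in> graph_nodes"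
  shows "node_meet E a b \<in> graph_nodes \<and> node_le E (node_meet E a b) a \<and> node_le E (node_meet E a b) b"
    (is "?P (node_meet E a b)")
proof -
  define lower where "lower d \<longleftrightarrow> node_le E d a \<and> node_le E d b" for d
  consider "node_le E a b" | "\<not> node_le E a b" "node_le E b a"
    | "\<not> node_le E a b" "\<not> node_le E b a" "\<exists>k. lower (Mark k)"
    | "\<not> node_le E a b" "\<not> node_le E b a" "\<nexists>k. lower (Mark k)" "\<exists>k. lower (Vert k)"
    | "\<not> node_le E a b" "\<not> node_le E b a" "\<nexists>k. lower (Mark k)" "\<nexists>k. lower (Vert k)"
    by blast
  then show ?thesis
  proof cases
    case 3
    from 3(3) have "lower (Mark (SOME k. lower (Mark k)))" by (rule someI_ex)
    then have "?P (Mark (SOME k. lower (Mark k)))" unfolding lower_def by simp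
    moreover have "node_meet E a b = Mark (SOME k. lower (Mark k))"
      using 3 by (simp only: node_meet_def lower_def[symmetric] if_False if_True)
    ultimately show ?thesis by simp
  next
    case 4
    from 4(4) have "lower (Vert (SOME k. lower (Vert k)))" by (rule someI_ex)
    then have "?P (Vert (SOME k. lower (Vert k)))" unfolding lower_def by simp
    moreover have "node_meet E a b = Vert (SOME k. lower (Vert k))"
      using 4 by (simp only: node_meet_def lower_def[symmetric] if_False if_True)
    ultimately show ?thesis by simp
  qed (use assms in \<open>auto simp: node_meet_def lower_def node_le_refl node_le_def\<close>)
qed

lemma common_Vert_below_unique:
  assumes "a \<in> graph_nodes" "b \<in> graph_nodes" "\<not> node_le E a b"
    and "node_le E (Vert k) a" "node_le E (Vert k) b" "node_le E (Vert k') a" "node_le E (Vert k') b"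
  shows "k = k'"
proof (rule ccontr)
  assume "k \<noteq> k'"
  then have "a = Link (min k k') (max k k')" "b = Link (min k k') (max k k')"
    using assms Link_unique_over_Vert by blast+
  then show False using assms(3) node_le_refl by metis
qed

lemma node_meet_Mark:
  assumes "a \<in> graph_nodes" "b \<in> graph_nodes" "\<not> node_le E a b" "\<not> node_le E b a"
    and "node_le E (Mark k) a" "node_le E (Mark k) b"
  shows "node_meet E a b = Mark k"
proof -
  have Vert_below: "node_le E (Vert j) a \<and> node_le E (Vert j) b" if "node_le E (Mark j) a \<and> node_le E (Mark j) b" for j
    using that assms(3,4) by (auto simp: node_le_def)
  have "(SOME j. node_le E (Mark j) a \<and> node_le E (Mark j) b) = k"
    using assms(5,6) Vert_below common_Vert_below_unique[OF assms(1-3)] by (metis (lifting) someI)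
  then show ?thesis using assms by (auto simp: node_meet_def)
qed

lemma node_meet_Vert:
  assumes "a \<in> graph_nodes" "b \<in> graph_nodes" "\<not> node_le E a b" "\<not> node_le E b a"
    and "\<nexists>j. node_le E (Mark j) a \<and> node_le E (Mark j) b" "node_le E (Vert k) a" "node_le E (Vert k) b"
  shows "node_meet E a b = Vert k"
proof -
  have "(SOME j. node_le E (Vert j) a \<and> node_le E (Vert j) b) = k"
    using assms(6,7) common_Vert_below_unique[OF assms(1-3)] by (metis (lifting) someI)
  then show ?thesis using assms by (auto simp: node_meet_def)
qed

lemma node_meet_greatest:
  assumes "a \<in> graph_nodes" "b \<in> graph_nodes" "node_le E c a" "node_le E c b"
  shows "node_le E c (node_meet E a b)"
proof (cases "node_le E a b \<or> node_le E b a")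
  case True
  then show ?thesis using assms by (auto simp: node_meet_def)
next
  case False
  then have incomparable: "\<not> node_le E a b" "\<not> node_le E b a" by auto
  show ?thesis
  proof (cases c)
    case Bot then show ?thesis by (simp add: node_le_def)
  next
    case (Vert j)
    show ?thesis
    proof (cases "\<exists>k. node_le E (Mark k) a \<and> node_le E (Mark k) b")
      case True
      then obtain k where k: "node_le E (Mark k) a" "node_le E (Mark k) b" by blast
      then have "node_le E (Vert k) a" "node_le E (Vert k) b"
        using incomparable by (auto simp: node_le_def)
      then have "k = j" using common_Vert_below_unique[OF assms(1,2) incomparable(1)] assms(3,4) Vert by blast
      then show ?thesis using node_meet_Mark[OF assms(1,2) incomparable k] Vert by (simp add: node_le_def)
    next
      case False
      then show ?thesis using node_meet_Vert[OF assms(1,2) incomparable False] assms(3,4) Vert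
        by (simp add: node_le_refl)
    qed
  next
    case (Mark j)
    then show ?thesis using node_meet_Mark[OF assms(1,2) incomparable] assms(3,4) by (simp add: node_le_refl)
  next
    case (Link k l)
    then show ?thesis using assms incomparable by (auto simp: node_le_def)
  qed
qed

definition graph_semigroup :: "(nat \<times> nat \<Rightarrow> bool) \<Rightarrow> nat \<times> nat \<Rightarrow> nat" where
  "graph_semigroup E = (\<lambda>(n, m). node_index (node_meet E (node_of n) (node_of m)))"

lemma meet_op_graph_poset: "meet_op (graph_poset E) (graph_semigroup E)"
proof -
  have meet: "node_meet E (node_of i) (node_of j) \<in> graph_nodes" for i j
    using node_meet_lower[OF node_of_in_graph_nodes node_of_in_graph_nodes] by blast
  show ?thesis unfolding meet_op_def
  proof (intro conjI allI impI)
    fix i show "graph_poset E (i, i)" by (simp add: graph_poset_def node_le_refl)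
  next
    fix i j assume "graph_poset E (i, j) \<and> graph_poset E (j, i)" then show "i = j"
      by (auto simp: graph_poset_def node_of_eq_iff dest: node_le_antisym)
  next
    fix i j k assume "graph_poset E (i, j) \<and> graph_poset E (j, k)" then show "graph_poset E (i, k)"
      by (auto simp: graph_poset_def intro: node_le_trans)
  next
    fix i j
    show "graph_poset E (graph_semigroup E (i, j), i)" "graph_poset E (graph_semigroup E (i, j), j)"
      using node_meet_lower[OF node_of_in_graph_nodes node_of_in_graph_nodes, of E i j] meet
      by (simp_all add: graph_poset_def graph_semigroup_def)
  next
    fix i j k assume "graph_poset E (k, i)" "graph_poset E (k, j)"
    then show "graph_poset E (k, graph_semigroup E (i, j))"
      using node_meet_greatest[OF node_of_in_graph_nodes node_of_in_graph_nodes] meet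
      by (simp add: graph_poset_def graph_semigroup_def)
  qed
qed

lemma graph_semigroup_in_semigroups: "graph_semigroup E \<in> semigroups"
  unfolding semigroups_def using meet_op_assoc[OF meet_op_graph_poset] by blast

section \<open>The poset and semigroup reductions\<close>

fun link_edge :: "gnode \<Rightarrow> (nat \<times> nat) set" where
  "link_edge (Link k l) = {(k, l)}"
| "link_edge _ = {}"

lemma finite_link_edge: "finite (link_edge a)"
  by (cases a) auto

lemma node_le_cong: "\<forall>k\<in>link_edge b. E k = E' k \<Longrightarrow> node_le E a b = node_le E' a b"
  by (cases b) (auto simp: node_le_def)

lemma node_meet_cong:
  assumes "\<forall>k\<in>link_edge a \<union> link_edge b. E k = E' k"
  shows "node_meet E a b = node_meet E' a b"
proof -
  have "node_le E c a = node_le E' c a" "node_le E c b = node_le E' c b" for c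
    using node_le_cong assms by blast+
  then show ?thesis unfolding node_meet_def by presburger
qed

lemma measurable_graph_poset: "graph_poset \<in> measurable code_space code_space"
proof (rule measurable_code_spaceI)
  fix i :: "nat \<times> nat"
  obtain n m where "i = (n, m)" by fastforce
  then show "(\<lambda>E. graph_poset E i) \<in> measurable code_space (count_space UNIV)"
    unfolding graph_poset_def prod.case
    by (intro measurable_finitely_determined[OF finite_link_edge[of "node_of m"]]) (simp add: node_le_cong)
qed

lemma measurable_graph_semigroup: "graph_semigroup \<in> measurable code_space code_space"
proof (rule measurable_code_spaceI)
  fix i :: "nat \<times> nat"
  obtain n m where i: "i = (n, m)" by fastforce
  have "finite (link_edge (node_of n) \<union> link_edge (node_of m))"
    by (simp add: finite_link_edge)
  then show "(\<lambda>E. graph_semigroup E i) \<in> measurable code_space (count_space UNIV)"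
    unfolding i graph_semigroup_def prod.case
    by (rule measurable_finitely_determined) (metis node_meet_cong)
qed

theorem spb_reduction_graph_poset:
  "spb_reduction code_space graphs rel_preserving code_space partial_orders rel_preserving graph_poset"
proof (rule spb_reduction_by_lift[where lift="\<lambda>_ _. node_lift"])
  show "graph_poset \<in> measurable (restrict_space code_space graphs) (restrict_space code_space partial_orders)"
    by (rule measurable_restrict_space_image[OF measurable_graph_poset])
      (auto simp: graph_poset_in_partial_orders)
qed (auto intro: graph_poset_node_lift graph_poset_iso_is_node_lift node_lift_inj
    simp: node_lift_comp dest: rel_preserving_inj)

theorem spb_reduction_graph_semigroup:
  "spb_reduction code_space graphs rel_preserving code_space semigroups op_preserving graph_semigroup"
proof (rule spb_reduction_by_lift[where lift="\<lambda>_ _. node_lift"])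
  show "graph_semigroup \<in> measurable (restrict_space code_space graphs) (restrict_space code_space semigroups)"
    by (rule measurable_restrict_space_image[OF measurable_graph_semigroup])
      (auto simp: graph_semigroup_in_semigroups)
qed (auto intro: graph_poset_node_lift graph_poset_iso_is_node_lift node_lift_inj
    simp: op_preserving_iff_rel_preserving[OF meet_op_graph_poset meet_op_graph_poset]
      node_lift_comp dest: rel_preserving_inj)

section \<open>The ring of a graph\<close>

lemma of_int_fun_apply [simp]: "(of_int n :: 'a \<Rightarrow> 'b::ring_1) x = of_int n"
  by (cases n) simp_all

definition almost_row_functions :: "(nat \<times> nat \<Rightarrow> int) set" where
  "almost_row_functions = {f. \<exists>d :: nat \<Rightarrow> int. \<exists>c. finite {i. d i \<noteq> c} \<and> finite {x. f x \<noteq> d (fst x)}}"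

lemma almost_row_functions_combine:
  assumes "f \<in> almost_row_functions" "g \<in> almost_row_functions"
  shows "(\<lambda>x. h (f x) (g x)) \<in> almost_row_functions"
proof -
  obtain d1 c1 where 1: "finite {i. d1 i \<noteq> c1}" "finite {x. f x \<noteq> d1 (fst x)}"
    using assms(1) by (auto simp: almost_row_functions_def)
  obtain d2 c2 where 2: "finite {i. d2 i \<noteq> c2}" "finite {x. g x \<noteq> d2 (fst x)}"
    using assms(2) by (auto simp: almost_row_functions_def)
  have "finite {i. h (d1 i) (d2 i) \<noteq> h c1 c2}"
    by (rule finite_subset[OF _ finite_UnI[OF 1(1) 2(1)]]) auto
  moreover have "finite {x. h (f x) (g x) \<noteq> h (d1 (fst x)) (d2 (fst x))}"
    by (rule finite_subset[OF _ finite_UnI[OF 1(2) 2(2)]]) auto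
  ultimately show ?thesis
    unfolding almost_row_functions_def by (intro CollectI exI[of _ "\<lambda>i. h (d1 i) (d2 i)"]) blast
qed

lemma row_function_in_almost_row_functions:
  "finite {i. d i \<noteq> c} \<Longrightarrow> (\<lambda>x. d (fst x)) \<in> almost_row_functions"
  unfolding almost_row_functions_def by auto

lemma finite_support_in_almost_row_functions:
  "finite {x. f x \<noteq> 0} \<Longrightarrow> f \<in> almost_row_functions"
  unfolding almost_row_functions_def by (intro CollectI exI[of _ "\<lambda>_. 0"]) simp

text \<open>The finiteness condition makes the ring countable while keeping the constants and the row
  indicators.\<close>

definition graph_ring :: "(nat \<times> nat \<Rightarrow> bool) \<Rightarrow> (nat \<times> nat \<Rightarrow> int) set" where
  "graph_ring E = {f \<in> almost_row_functions.
      (\<forall>i j k. f (i, j) mod 2 = f (i, k) mod 2) \<and> (\<forall>i j. f (i, j) mod 3 = f (j, i) mod 3)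
      \<and> (\<forall>i j. E (i, j) \<longrightarrow> f (i, j) mod 5 = f (j, i) mod 5)}"

lemma graph_ring_combine:
  assumes "f \<in> graph_ring E" "g \<in> graph_ring E"
    and cong: "\<And>m a a' b b'. a mod m = a' mod m \<Longrightarrow> b mod m = b' mod m \<Longrightarrow> h a b mod m = h a' b' mod m"
  shows "(\<lambda>x. h (f x) (g x)) \<in> graph_ring E"
  using assms(1,2) almost_row_functions_combine unfolding graph_ring_def by (auto intro!: cong)

lemma graph_ring_add: "f \<in> graph_ring E \<Longrightarrow> g \<in> graph_ring E \<Longrightarrow> f + g \<in> graph_ring E"
  unfolding plus_fun_def by (rule graph_ring_combine) (auto intro: mod_add_cong)

lemma graph_ring_mult: "f \<in> graph_ring E \<Longrightarrow> g \<in> graph_ring E \<Longrightarrow> f * g \<in> graph_ring E"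
  unfolding times_fun_def by (rule graph_ring_combine) (auto intro: mod_mult_cong)

lemma graph_ring_uminus: "f \<in> graph_ring E \<Longrightarrow> - f \<in> graph_ring E"
  unfolding fun_Compl_def by (rule graph_ring_combine[where h="\<lambda>a b. - a"]) (auto intro: mod_minus_cong)

lemma graph_ring_const: "(\<lambda>_. c) \<in> graph_ring E"
  using row_function_in_almost_row_functions[of "\<lambda>_. c" c] by (simp add: graph_ring_def)

lemma graph_ring_of_int: "of_int c \<in> graph_ring E"
proof -
  have "of_int c = (\<lambda>_ :: nat \<times> nat. c)" by (rule ext) simp
  then show ?thesis using graph_ring_const by simp
qed

lemma infinite_graph_ring: "infinite (graph_ring E)"
proof
  assume "finite (graph_ring E)"
  moreover have "range (\<lambda>c. \<lambda>_ :: nat \<times> nat. c) \<subseteq> graph_ring E" using graph_ring_const by blast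
  ultimately have "finite (range (\<lambda>c. \<lambda>_ :: nat \<times> nat. c :: int))" by (rule finite_subset[rotated])
  moreover have "inj (\<lambda>c. \<lambda>_ :: nat \<times> nat. c :: int)" by (auto simp: inj_def dest: fun_cong)
  ultimately show False using finite_imageD by fastforce
qed

text \<open>The factor \<open>30 = 2 \<cdot> 3 \<cdot> 5\<close> makes a single nonzero entry compatible with all three congruences.\<close>

definition spike :: "nat \<times> nat \<Rightarrow> nat \<times> nat \<Rightarrow> int" where
  "spike a = (\<lambda>x. if x = a then 30 else 0)"

lemma spike_in_graph_ring: "spike a \<in> graph_ring E"
proof -
  have "{x. spike a x \<noteq> 0} = {a}" by (auto simp: spike_def)
  then have "spike a \<in> almost_row_functions" by (intro finite_support_in_almost_row_functions) simp
  then show ?thesis unfolding graph_ring_def by (auto simp: spike_def)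
qed

lemma spike_eq_iff: "spike a = spike b \<longleftrightarrow> a = b"
proof
  assume "spike a = spike b"
  then have "spike a a = spike b a" by simp
  then show "a = b" by (simp add: spike_def split: if_splits)
qed simp

lemma spike_neq_zero: "spike a \<noteq> 0"
proof
  assume "spike a = 0"
  then have "spike a a = 0" by simp
  then show False by (simp add: spike_def)
qed

definition ring_congruent :: "(nat \<times> nat \<Rightarrow> bool) \<Rightarrow> int \<Rightarrow> nat \<times> nat \<Rightarrow> nat \<times> nat \<Rightarrow> bool" where
  "ring_congruent E m a b \<longleftrightarrow> (\<forall>f\<in>graph_ring E. f a mod m = f b mod m)"

lemma ring_congruent_2_iff: "ring_congruent E 2 a b \<longleftrightarrow> fst a = fst b"
proof
  assume congruent: "ring_congruent E 2 a b"
  define w where "w = (\<lambda>x :: nat \<times> nat. if fst x = fst a then 15 else 0 :: int)"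
  have "finite {i. (if i = fst a then 15 else 0 :: int) \<noteq> 0}" by simp
  then have "w \<in> graph_ring E"
    using row_function_in_almost_row_functions unfolding graph_ring_def w_def by auto
  then have "w a mod 2 = w b mod 2" using congruent by (auto simp: ring_congruent_def)
  then show "fst a = fst b" by (auto simp: w_def split: if_splits)
next
  assume "fst a = fst b"
  then show "ring_congruent E 2 a b"
    unfolding ring_congruent_def graph_ring_def by (cases a; cases b) auto
qed

lemma ring_congruent_3_iff: "ring_congruent E 3 a b \<longleftrightarrow> b = a \<or> b = prod.swap a"
proof
  assume congruent: "ring_congruent E 3 a b"
  define w where "w = (\<lambda>x. if x = a \<or> x = prod.swap a then 10 else 0 :: int)"
  have "{x. w x \<noteq> 0} \<subseteq> {a, prod.swap a}" by (auto simp: w_def)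
  then have "w \<in> almost_row_functions"
    by (intro finite_support_in_almost_row_functions) (rule finite_subset, auto)
  moreover have "w (i, j) = w (j, i)" for i j by (cases a) (auto simp: w_def)
  ultimately have "w \<in> graph_ring E" unfolding graph_ring_def by (auto simp: w_def)
  then have "w a mod 3 = w b mod 3" using congruent by (auto simp: ring_congruent_def)
  then show "b = a \<or> b = prod.swap a" by (auto simp: w_def split: if_splits)
next
  assume "b = a \<or> b = prod.swap a"
  then show "ring_congruent E 3 a b"
    unfolding ring_congruent_def graph_ring_def by (cases a) auto
qed

lemma ring_congruent_5_iff:
  assumes "E \<in> graphs"
  shows "ring_congruent E 5 a b \<longleftrightarrow> b = a \<or> (b = prod.swap a \<and> E a)"
proof
  assume congruent: "ring_congruent E 5 a b"
  define w where "w = (\<lambda>x. if x = a \<or> (prod.swap x = a \<and> E x) then 6 else 0 :: int)"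
  have "{x. w x \<noteq> 0} \<subseteq> {a, prod.swap a}" by (auto simp: w_def)
  then have "w \<in> almost_row_functions"
    by (intro finite_support_in_almost_row_functions) (rule finite_subset, auto)
  moreover have "w x mod 2 = 0" "w x mod 3 = 0" for x by (simp_all add: w_def)
  moreover have "\<forall>i j. E (i, j) \<longrightarrow> w (i, j) mod 5 = w (j, i) mod 5"
    using graph_sym[OF assms] by (auto simp: w_def)
  ultimately have "w \<in> graph_ring E" unfolding graph_ring_def by simp
  then have "w a mod 5 = w b mod 5" using congruent by (auto simp: ring_congruent_def)
  then have "b = a \<or> (prod.swap b = a \<and> E b)" by (auto simp: w_def split: if_splits)
  then show "b = a \<or> (b = prod.swap a \<and> E a)"
    using graph_sym[OF assms, of "fst b" "snd b"] by (cases b) auto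
next
  assume "b = a \<or> (b = prod.swap a \<and> E a)"
  then show "ring_congruent E 5 a b"
    unfolding ring_congruent_def graph_ring_def by (cases a) auto
qed

definition spike_like :: "(nat \<times> nat \<Rightarrow> bool) \<Rightarrow> (nat \<times> nat \<Rightarrow> int) \<Rightarrow> bool" where
  "spike_like E h \<longleftrightarrow> h \<in> graph_ring E \<and> h * h = 30 * h \<and> h \<noteq> 0 \<and>
     (\<forall>h'\<in>graph_ring E. h' * h' = 30 * h' \<and> h' * h = 30 * h' \<longrightarrow> h' = 0 \<or> h' = h)"

lemma spike_like_iff: "spike_like E h \<longleftrightarrow> (\<exists>a. h = spike a)"
proof
  assume "spike_like E h"
  then have square: "h * h = 30 * h" and "h \<noteq> 0"
    and minimal: "\<And>h'. h' \<in> graph_ring E \<Longrightarrow> h' * h' = 30 * h' \<Longrightarrow> h' * h = 30 * h' \<Longrightarrow> h' = 0 \<or> h' = h"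
    by (auto simp: spike_like_def)
  obtain a where "h a \<noteq> 0" using \<open>h \<noteq> 0\<close> by (auto simp: fun_eq_iff)
  moreover have "h a * h a = 30 * h a" using fun_cong[OF square, of a] by simp
  ultimately have "h a = 30" by simp
  then have "spike a * spike a = 30 * spike a" "spike a * h = 30 * spike a"
    by (auto simp: fun_eq_iff spike_def)
  then have "spike a = h" using minimal[OF spike_in_graph_ring] spike_neq_zero by blast
  then show "\<exists>a. h = spike a" by blast
next
  assume "\<exists>a. h = spike a"
  then obtain a where h: "h = spike a" by blast
  show "spike_like E h" unfolding spike_like_def
  proof (intro conjI ballI impI)
    show "h \<in> graph_ring E" "h \<noteq> 0" using h spike_in_graph_ring spike_neq_zero by simp_all
    show "h * h = 30 * h" by (simp add: h fun_eq_iff spike_def)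
    fix h' assume h': "h' * h' = 30 * h' \<and> h' * h = 30 * h'"
    have off: "h' x = 0" if "x \<noteq> a" for x
    proof -
      have "(h' * h) x = (30 * h') x" using h' by simp
      then show ?thesis using that by (simp add: h spike_def)
    qed
    have "(h' * h') a = (30 * h') a" using h' by simp
    then have "h' a = 0 \<or> h' a = 30" by auto
    then show "h' = 0 \<or> h' = h"
    proof
      assume "h' a = 0"
      then have "h' = 0" by (intro ext) (metis off zero_fun_apply)
      then show ?thesis ..
    next
      assume "h' a = 30"
      then have "h' = h" by (intro ext) (simp add: h spike_def off)
      then show ?thesis ..
    qed
  qed
qed

locale graph_ring_iso =
  fixes E1 E2 :: "nat \<times> nat \<Rightarrow> bool" and \<Phi> :: "(nat \<times> nat \<Rightarrow> int) \<Rightarrow> (nat \<times> nat \<Rightarrow> int)"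
  assumes bij: "bij_betw \<Phi> (graph_ring E1) (graph_ring E2)"
    and add: "\<And>f g. f \<in> graph_ring E1 \<Longrightarrow> g \<in> graph_ring E1 \<Longrightarrow> \<Phi> (f + g) = \<Phi> f + \<Phi> g"
    and mult: "\<And>f g. f \<in> graph_ring E1 \<Longrightarrow> g \<in> graph_ring E1 \<Longrightarrow> \<Phi> (f * g) = \<Phi> f * \<Phi> g"
begin

lemma in_graph_ring: "f \<in> graph_ring E1 \<Longrightarrow> \<Phi> f \<in> graph_ring E2"
  using bij bij_betwE by blast

lemma eq_iff: "f \<in> graph_ring E1 \<Longrightarrow> g \<in> graph_ring E1 \<Longrightarrow> \<Phi> f = \<Phi> g \<longleftrightarrow> f = g"
  using bij by (auto simp: bij_betw_def inj_on_def)

lemma onto: "h \<in> graph_ring E2 \<Longrightarrow> \<exists>f\<in>graph_ring E1. h = \<Phi> f"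
  using bij by (auto simp: bij_betw_def)

lemma zero: "\<Phi> 0 = 0"
proof -
  have "0 \<in> graph_ring E1" using graph_ring_of_int[of 0] by simp
  then have "\<Phi> 0 + \<Phi> 0 = \<Phi> 0" using add[of 0 0] by simp
  then show ?thesis by simp
qed

lemma uminus:
  assumes "f \<in> graph_ring E1"
  shows "\<Phi> (- f) = - \<Phi> f"
proof -
  have "\<Phi> f + \<Phi> (- f) = \<Phi> (f + - f)" using add[OF assms graph_ring_uminus[OF assms]] by simp
  also have "\<dots> = 0" using zero by simp
  finally have "- \<Phi> f = \<Phi> (- f)" by (simp only: neg_eq_iff_add_eq_0)
  then show ?thesis ..
qed

lemma of_int_mult:
  assumes "f \<in> graph_ring E1"
  shows "\<Phi> (of_int n * f) = of_int n * \<Phi> f"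
proof -
  have in_ring: "of_nat k * f \<in> graph_ring E1" for k
    using graph_ring_mult[OF graph_ring_of_int assms, of "int k"] by simp
  have nat_case: "\<Phi> (of_nat k * f) = of_nat k * \<Phi> f" for k
  proof (induction k)
    case 0 then show ?case using zero by (simp add: zero_fun_def)
  next
    case (Suc k)
    have "of_nat (Suc k) * g = of_nat k * g + g" for g :: "nat \<times> nat \<Rightarrow> int"
      by (simp add: algebra_simps)
    then show ?case using add[OF in_ring assms] Suc.IH by (simp only:)
  qed
  show ?thesis
  proof (cases n rule: int_cases)
    case (nonneg k)
    have "of_int (int k) * g = of_nat k * g" for g :: "nat \<times> nat \<Rightarrow> int" by simp
    then show ?thesis using nat_case nonneg by (simp only:)
  next
    case (neg k)
    have "of_int (- int (Suc k)) * g = - (of_nat (Suc k) * g)" for g :: "nat \<times> nat \<Rightarrow> int"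
      by (simp add: algebra_simps)
    then show ?thesis using neg nat_case uminus[OF in_ring] by (simp only:)
  qed
qed

lemma thirty_mult: "g \<in> graph_ring E1 \<Longrightarrow> \<Phi> (30 * g) = 30 * \<Phi> g"
  using of_int_mult[of g 30] by simp

lemma spike_like_image: "spike_like E1 h \<Longrightarrow> spike_like E2 (\<Phi> h)"
  unfolding spike_like_def
proof (elim conjE, intro conjI ballI impI)
  assume h: "h \<in> graph_ring E1" and square: "h * h = 30 * h" and "h \<noteq> 0"
    and minimal: "\<forall>h'\<in>graph_ring E1. h' * h' = 30 * h' \<and> h' * h = 30 * h' \<longrightarrow> h' = 0 \<or> h' = h"
  have zero_in: "0 \<in> graph_ring E1" using graph_ring_of_int[of 0] by simp
  have thirty_in: "30 * g \<in> graph_ring E1" if "g \<in> graph_ring E1" for g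
    using graph_ring_mult[OF graph_ring_of_int that, of 30] by simp
  show "\<Phi> h \<in> graph_ring E2" using in_graph_ring[OF h] .
  show "\<Phi> h * \<Phi> h = 30 * \<Phi> h" using mult[OF h h] square thirty_mult[OF h] by simp
  show "\<Phi> h \<noteq> 0" using \<open>h \<noteq> 0\<close> zero eq_iff[OF h zero_in] by simp
  fix h' assume "h' \<in> graph_ring E2" and h': "h' * h' = 30 * h' \<and> h' * \<Phi> h = 30 * h'"
  then obtain g where g: "g \<in> graph_ring E1" "h' = \<Phi> g" using onto by blast
  have "\<Phi> (g * g) = \<Phi> (30 * g)" using h' g mult[OF g(1) g(1)] thirty_mult[OF g(1)] by simp
  then have "g * g = 30 * g" using eq_iff[OF graph_ring_mult[OF g(1) g(1)] thirty_in[OF g(1)]] by simp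
  moreover have "\<Phi> (g * h) = \<Phi> (30 * g)" using h' g mult[OF g(1) h] thirty_mult[OF g(1)] by simp
  then have "g * h = 30 * g" using eq_iff[OF graph_ring_mult[OF g(1) h] thirty_in[OF g(1)]] by simp
  ultimately show "h' = 0 \<or> h' = \<Phi> h" using minimal g zero by auto
qed

lemma inverse: "graph_ring_iso E2 E1 (inv_into (graph_ring E1) \<Phi>)"
proof
  let ?\<Phi>' = "inv_into (graph_ring E1) \<Phi>"
  show bij': "bij_betw ?\<Phi>' (graph_ring E2) (graph_ring E1)" by (rule bij_betw_inv_into[OF bij])
  have right: "\<Phi> (?\<Phi>' h) = h" if "h \<in> graph_ring E2" for h
    using that bij by (simp add: bij_betw_inv_into_right)
  have into: "?\<Phi>' h \<in> graph_ring E1" if "h \<in> graph_ring E2" for h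
    using that bij' bij_betwE by blast
  have left: "?\<Phi>' (\<Phi> f) = f" if "f \<in> graph_ring E1" for f
    using that bij by (simp add: bij_betw_inv_into_left)
  fix f g assume f: "f \<in> graph_ring E2" and g: "g \<in> graph_ring E2"
  have "?\<Phi>' (f + g) = ?\<Phi>' (\<Phi> (?\<Phi>' f + ?\<Phi>' g))"
    using add[OF into[OF f] into[OF g]] right[OF f] right[OF g] by simp
  also have "\<dots> = ?\<Phi>' f + ?\<Phi>' g" using left graph_ring_add[OF into[OF f] into[OF g]] by blast
  finally show "?\<Phi>' (f + g) = ?\<Phi>' f + ?\<Phi>' g" .
  have "?\<Phi>' (f * g) = ?\<Phi>' (\<Phi> (?\<Phi>' f * ?\<Phi>' g))"
    using mult[OF into[OF f] into[OF g]] right[OF f] right[OF g] by simp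
  also have "\<dots> = ?\<Phi>' f * ?\<Phi>' g" using left graph_ring_mult[OF into[OF f] into[OF g]] by blast
  finally show "?\<Phi>' (f * g) = ?\<Phi>' f * ?\<Phi>' g" .
qed

end

definition transport :: "(nat \<Rightarrow> nat) \<Rightarrow> (nat \<times> nat \<Rightarrow> int) \<Rightarrow> nat \<times> nat \<Rightarrow> int" where
  "transport \<pi> f = (\<lambda>x. f (map_prod (inv_into UNIV \<pi>) (inv_into UNIV \<pi>) x))"

lemma graph_ring_comp_map_prod:
  assumes "inj \<rho>" and edges: "\<forall>i j. E2 (i, j) \<longrightarrow> E1 (\<rho> i, \<rho> j)" and f: "f \<in> graph_ring E1"
  shows "(\<lambda>x. f (map_prod \<rho> \<rho> x)) \<in> graph_ring E2"
proof -
  obtain d c where F: "finite {i. d i \<noteq> c}" and G: "finite {x. f x \<noteq> d (fst x)}"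
    using f by (auto simp: graph_ring_def almost_row_functions_def)
  have "finite {i. d (\<rho> i) \<noteq> c}"
    using finite_vimageI[OF F \<open>inj \<rho>\<close>] by (simp add: vimage_def)
  moreover have "{x. f (map_prod \<rho> \<rho> x) \<noteq> d (\<rho> (fst x))} = map_prod \<rho> \<rho> -` {x. f x \<noteq> d (fst x)}"
    by (auto simp: map_prod_def split: prod.splits)
  then have "finite {x. f (map_prod \<rho> \<rho> x) \<noteq> d (\<rho> (fst x))}"
    using finite_vimageI[OF G, of "map_prod \<rho> \<rho>"] map_prod_inj_on[OF \<open>inj \<rho>\<close> \<open>inj \<rho>\<close>] by simp
  ultimately have "(\<lambda>x. f (map_prod \<rho> \<rho> x)) \<in> almost_row_functions"
    unfolding almost_row_functions_def by (intro CollectI exI[of _ "\<lambda>i. d (\<rho> i)"]) blast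
  moreover have "f (\<rho> i, \<rho> j) mod 5 = f (\<rho> j, \<rho> i) mod 5" if "E2 (i, j)" for i j
  proof -
    have "E1 (\<rho> i, \<rho> j)" using that edges by blast
    then show ?thesis using f unfolding graph_ring_def by blast
  qed
  ultimately show ?thesis using f unfolding graph_ring_def by auto
qed

lemma transport_in_graph_ring:
  assumes "bij \<pi>" "\<forall>i j. E1 (i, j) \<longleftrightarrow> E2 (\<pi> i, \<pi> j)" "f \<in> graph_ring E1"
  shows "transport \<pi> f \<in> graph_ring E2"
  unfolding transport_def
  by (rule graph_ring_comp_map_prod[OF bij_is_inj[OF bij_imp_bij_inv[OF assms(1)]] _ assms(3)])
    (use assms in \<open>simp add: bij_is_surj surj_f_inv_f\<close>)

lemma transport_comp: "bij \<pi> \<Longrightarrow> bij \<rho> \<Longrightarrow> transport (\<pi> \<circ> \<rho>) f = transport \<pi> (transport \<rho> f)"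
  unfolding transport_def by (simp add: o_inv_distrib map_prod_def split_def)

lemma transport_inv: "bij \<pi> \<Longrightarrow> transport (inv_into UNIV \<pi>) (transport \<pi> f) = f"
  unfolding transport_def by (simp add: inv_inv_eq bij_is_inj map_prod_def split_def)

lemma bij_betw_transport:
  assumes "bij \<pi>" and iso: "\<forall>i j. E1 (i, j) \<longleftrightarrow> E2 (\<pi> i, \<pi> j)"
  shows "bij_betw (transport \<pi>) (graph_ring E1) (graph_ring E2)"
proof (rule bij_betw_byWitness[where f'="transport (inv_into UNIV \<pi>)"])
  have "bij (inv_into UNIV \<pi>)" and inv_inv: "inv_into UNIV (inv_into UNIV \<pi>) = \<pi>"
    using \<open>bij \<pi>\<close> by (simp_all add: bij_imp_bij_inv inv_inv_eq)
  moreover have "\<forall>i j. E2 (i, j) \<longleftrightarrow> E1 (inv_into UNIV \<pi> i, inv_into UNIV \<pi> j)"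
    using \<open>bij \<pi>\<close> iso by (simp add: bij_is_surj surj_f_inv_f)
  ultimately show "transport (inv_into UNIV \<pi>) ` graph_ring E2 \<subseteq> graph_ring E1"
    "\<forall>f\<in>graph_ring E2. transport \<pi> (transport (inv_into UNIV \<pi>) f) = f"
    using transport_in_graph_ring transport_inv[of "inv_into UNIV \<pi>"] by auto
  show "transport \<pi> ` graph_ring E1 \<subseteq> graph_ring E2"
    "\<forall>f\<in>graph_ring E1. transport (inv_into UNIV \<pi>) (transport \<pi> f) = f"
    using transport_in_graph_ring[OF assms] transport_inv[OF \<open>bij \<pi>\<close>] by auto
qed

lemma transport_add: "transport \<pi> (f + g) = transport \<pi> f + transport \<pi> g"
  by (simp add: transport_def plus_fun_def)

lemma transport_mult: "transport \<pi> (f * g) = transport \<pi> f * transport \<pi> g"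
  by (simp add: transport_def times_fun_def)

context graph_ring_iso
begin

lemma spike_like_image_iff:
  assumes "h \<in> graph_ring E1"
  shows "spike_like E2 (\<Phi> h) \<longleftrightarrow> spike_like E1 h"
proof
  assume "spike_like E2 (\<Phi> h)"
  then have "spike_like E1 (inv_into (graph_ring E1) \<Phi> (\<Phi> h))"
    by (rule graph_ring_iso.spike_like_image[OF inverse])
  then show "spike_like E1 h" using bij assms by (simp add: bij_betw_inv_into_left)
qed (rule spike_like_image)

definition coord_perm :: "nat \<times> nat \<Rightarrow> nat \<times> nat" where
  "coord_perm a = (SOME b. \<Phi> (spike a) = spike b)"

lemma maps_spike: "\<Phi> (spike a) = spike (coord_perm a)"
proof -
  obtain b where "\<Phi> (spike a) = spike b"
    using spike_like_image spike_like_iff by blast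
  then show ?thesis unfolding coord_perm_def by (rule someI)
qed

lemma coord_perm_eq_iff: "coord_perm a = coord_perm b \<longleftrightarrow> a = b"
proof
  assume "coord_perm a = coord_perm b"
  then have "\<Phi> (spike a) = \<Phi> (spike b)" by (simp add: maps_spike)
  then show "a = b" using eq_iff[OF spike_in_graph_ring spike_in_graph_ring] spike_eq_iff by simp
qed simp

lemma coord_perm_onto: "\<exists>a. b = coord_perm a"
proof -
  obtain f where f: "f \<in> graph_ring E1" "spike b = \<Phi> f" using onto[OF spike_in_graph_ring] by blast
  have "spike_like E2 (\<Phi> f)" unfolding f(2)[symmetric] spike_like_iff by blast
  then have "spike_like E1 f" using spike_like_image_iff[OF f(1)] by simp
  then obtain a where "f = spike a" using spike_like_iff by blast
  then have "spike b = spike (coord_perm a)" using f(2) maps_spike by simp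
  then show ?thesis using spike_eq_iff by blast
qed

text \<open>Multiplying by the spike at \<open>a\<close> reads off the entry at \<open>a\<close>.\<close>

lemma apply_coord_perm: "f \<in> graph_ring E1 \<Longrightarrow> \<Phi> f (coord_perm a) = f a"
proof -
  assume f: "f \<in> graph_ring E1"
  have "\<Phi> f * spike (coord_perm a) = \<Phi> (f * spike a)" using mult[OF f spike_in_graph_ring] maps_spike by simp
  also have "f * spike a = of_int (f a) * spike a" by (auto simp: fun_eq_iff spike_def)
  also have "\<Phi> \<dots> = of_int (f a) * spike (coord_perm a)" using of_int_mult[OF spike_in_graph_ring] maps_spike by simp
  finally have "(\<Phi> f * spike (coord_perm a)) (coord_perm a)
      = (of_int (f a) * spike (coord_perm a)) (coord_perm a)"
    by (rule fun_cong)
  then show "\<Phi> f (coord_perm a) = f a" by (simp add: spike_def)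
qed

lemma ring_congruent_coord_perm_iff:
  "ring_congruent E2 m (coord_perm a) (coord_perm b) \<longleftrightarrow> ring_congruent E1 m a b"
proof
  assume congruent: "ring_congruent E1 m a b"
  show "ring_congruent E2 m (coord_perm a) (coord_perm b)" unfolding ring_congruent_def
  proof
    fix g assume "g \<in> graph_ring E2"
    then obtain f where "f \<in> graph_ring E1" "g = \<Phi> f" using onto by blast
    then show "g (coord_perm a) mod m = g (coord_perm b) mod m"
      using congruent apply_coord_perm by (simp add: ring_congruent_def)
  qed
next
  assume congruent: "ring_congruent E2 m (coord_perm a) (coord_perm b)"
  show "ring_congruent E1 m a b" unfolding ring_congruent_def
  proof
    fix f assume f: "f \<in> graph_ring E1"
    then have "\<Phi> f (coord_perm a) mod m = \<Phi> f (coord_perm b) mod m"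
      using congruent in_graph_ring unfolding ring_congruent_def by blast
    then show "f a mod m = f b mod m" using apply_coord_perm[OF f] by simp
  qed
qed

definition vertex_perm :: "nat \<Rightarrow> nat" where
  "vertex_perm i = fst (coord_perm (i, 0))"

lemma fst_coord_perm: "fst (coord_perm (i, j)) = vertex_perm i"
proof -
  have "ring_congruent E1 2 (i, j) (i, 0)" by (simp add: ring_congruent_2_iff)
  then have "ring_congruent E2 2 (coord_perm (i, j)) (coord_perm (i, 0))"
    by (simp only: ring_congruent_coord_perm_iff)
  then show ?thesis unfolding vertex_perm_def ring_congruent_2_iff .
qed

lemma coord_perm_swap: "coord_perm (j, i) = prod.swap (coord_perm (i, j))"
proof (cases "i = j")
  case True
  obtain z where z: "prod.swap (coord_perm (i, i)) = coord_perm z" using coord_perm_onto by blast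
  have "ring_congruent E2 3 (coord_perm (i, i)) (coord_perm z)"
    unfolding z[symmetric] ring_congruent_3_iff by simp
  then have "ring_congruent E1 3 (i, i) z" by (simp only: ring_congruent_coord_perm_iff)
  then have "z = (i, i)" unfolding ring_congruent_3_iff by auto
  then show ?thesis using z True by simp
next
  case False
  have "ring_congruent E1 3 (i, j) (j, i)" by (simp add: ring_congruent_3_iff)
  then have "ring_congruent E2 3 (coord_perm (i, j)) (coord_perm (j, i))"
    by (simp only: ring_congruent_coord_perm_iff)
  then have "coord_perm (j, i) = coord_perm (i, j) \<or> coord_perm (j, i) = prod.swap (coord_perm (i, j))"
    by (simp only: ring_congruent_3_iff)
  moreover have "coord_perm (j, i) \<noteq> coord_perm (i, j)" using False coord_perm_eq_iff by simp
  ultimately show ?thesis by blast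
qed

lemma coord_perm_pair: "coord_perm (i, j) = (vertex_perm i, vertex_perm j)"
proof -
  have "snd (coord_perm (i, j)) = fst (coord_perm (j, i))" by (simp only: coord_perm_swap[of i j] snd_swap)
  then show ?thesis using fst_coord_perm by (simp add: prod_eq_iff)
qed

lemma bij_vertex_perm: "bij vertex_perm"
proof (rule bijI)
  show "inj vertex_perm"
  proof (rule injI)
    fix i j assume "vertex_perm i = vertex_perm j"
    then have "coord_perm (i, i) = coord_perm (j, j)" by (simp add: coord_perm_pair)
    then show "i = j" by (simp add: coord_perm_eq_iff)
  qed
  show "surj vertex_perm"
  proof (rule surj_def[THEN iffD2, rule_format])
    fix k
    obtain z where "(k, k) = coord_perm z" using coord_perm_onto by blast
    then show "\<exists>i. k = vertex_perm i" by (cases z) (auto simp: coord_perm_pair)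
  qed
qed

lemma edge_iff:
  assumes "E1 \<in> graphs" "E2 \<in> graphs"
  shows "E1 (i, j) \<longleftrightarrow> E2 (vertex_perm i, vertex_perm j)"
proof (cases "i = j")
  case True then show ?thesis using graph_irrefl assms by blast
next
  case False
  then have "vertex_perm i \<noteq> vertex_perm j" using bij_vertex_perm by (simp add: bij_is_inj inj_eq)
  have "E1 (i, j) \<longleftrightarrow> ring_congruent E1 5 (i, j) (j, i)"
    using ring_congruent_5_iff[OF assms(1)] False by auto
  also have "\<dots> \<longleftrightarrow> ring_congruent E2 5 (vertex_perm i, vertex_perm j) (vertex_perm j, vertex_perm i)"
    using ring_congruent_coord_perm_iff[of 5 "(i, j)" "(j, i)"] by (simp add: coord_perm_pair)
  also have "\<dots> \<longleftrightarrow> E2 (vertex_perm i, vertex_perm j)"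
    using ring_congruent_5_iff[OF assms(2)] \<open>vertex_perm i \<noteq> vertex_perm j\<close> by auto
  finally show ?thesis .
qed

lemma eq_transport: "f \<in> graph_ring E1 \<Longrightarrow> \<Phi> f = transport vertex_perm f"
proof
  fix x :: "nat \<times> nat"
  assume "f \<in> graph_ring E1"
  obtain i j where x: "x = (i, j)" by fastforce
  let ?x = "(inv_into UNIV vertex_perm i, inv_into UNIV vertex_perm j)"
  have "coord_perm ?x = x"
    using x bij_vertex_perm by (simp add: coord_perm_pair bij_is_surj surj_f_inv_f)
  then show "\<Phi> f x = transport vertex_perm f x"
    using apply_coord_perm[OF \<open>f \<in> graph_ring E1\<close>, of ?x] by (simp add: transport_def x)
qed

end

lemma graph_ring_iso_is_transport:
  assumes "graph_ring_iso E1 E2 \<Phi>" "E1 \<in> graphs" "E2 \<in> graphs"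
  shows "\<exists>\<pi>. rel_preserving E1 E2 \<pi> \<and> (\<forall>f\<in>graph_ring E1. \<Phi> f = transport \<pi> f)"
  using graph_ring_iso.bij_vertex_perm[OF assms(1)] graph_ring_iso.edge_iff[OF assms]
    graph_ring_iso.eq_transport[OF assms(1)]
  unfolding rel_preserving_def by blast

section \<open>Coding the ring on the natural numbers\<close>

fun decode_almost_row :: "int \<times> (nat \<times> int) list \<times> ((nat \<times> nat) \<times> int) list \<Rightarrow> nat \<times> nat \<Rightarrow> int" where
  "decode_almost_row (c, row_list, entry_list) x = (case map_of entry_list x of Some v \<Rightarrow> v
      | None \<Rightarrow> (case map_of row_list (fst x) of Some v \<Rightarrow> v | None \<Rightarrow> c))"

lemma map_of_graph: "map_of (map (\<lambda>x. (x, h x)) xs) x = (if x \<in> set xs then Some (h x) else None)"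
  by (induction xs) auto

lemma countable_almost_row_functions: "countable almost_row_functions"
proof (rule countable_subset[of _ "range decode_almost_row"])
  show "almost_row_functions \<subseteq> range decode_almost_row"
  proof
    fix f assume "f \<in> almost_row_functions"
    then obtain d c where "finite {i. d i \<noteq> c}" "finite {x. f x \<noteq> d (fst x)}"
      by (auto simp: almost_row_functions_def)
    then obtain row_list entry_list where row_list: "set row_list = {i. d i \<noteq> c}"
      and entry_list: "set entry_list = {x. f x \<noteq> d (fst x)}"
      using finite_list by metis
    have "decode_almost_row (c, map (\<lambda>i. (i, d i)) row_list, map (\<lambda>x. (x, f x)) entry_list) = f"
      using row_list entry_list by (auto simp: fun_eq_iff map_of_graph)
    then show "f \<in> range decode_almost_row" by (metis rangeI)
  qed
qed simp

lemma infinite_almost_row_functions: "infinite almost_row_functions"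
  using infinite_graph_ring[of "\<lambda>_. False"] infinite_super by (auto simp: graph_ring_def)

text \<open>The ring of a graph is enumerated through a fixed enumeration of the ambient countable set,
  so that the coded operations depend measurably on the graph.\<close>

definition almost_row_enum :: "nat \<Rightarrow> nat \<times> nat \<Rightarrow> int" where
  "almost_row_enum = from_nat_into almost_row_functions"

definition ring_positions :: "(nat \<times> nat \<Rightarrow> bool) \<Rightarrow> nat set" where
  "ring_positions E = {n. almost_row_enum n \<in> graph_ring E}"

definition ring_elt :: "(nat \<times> nat \<Rightarrow> bool) \<Rightarrow> nat \<Rightarrow> nat \<times> nat \<Rightarrow> int" where
  "ring_elt E = almost_row_enum \<circ> enumerate (ring_positions E)"

definition ring_index :: "(nat \<times> nat \<Rightarrow> bool) \<Rightarrow> (nat \<times> nat \<Rightarrow> int) \<Rightarrow> nat" where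
  "ring_index E = inv_into UNIV (ring_elt E)"

lemma bij_betw_almost_row_enum: "bij_betw almost_row_enum UNIV almost_row_functions"
  unfolding almost_row_enum_def
  by (rule bij_betw_from_nat_into[OF countable_almost_row_functions infinite_almost_row_functions])

lemma bij_betw_almost_row_enum_ring_positions: "bij_betw almost_row_enum (ring_positions E) (graph_ring E)"
proof -
  have "graph_ring E \<subseteq> almost_row_functions" by (auto simp: graph_ring_def)
  then have "almost_row_enum ` ring_positions E = graph_ring E"
    using bij_betw_almost_row_enum by (auto simp: ring_positions_def bij_betw_def)
  then show ?thesis
    using bij_betw_almost_row_enum by (auto simp: bij_betw_def inj_on_def)
qed

lemma infinite_ring_positions: "infinite (ring_positions E)"
  using bij_betw_almost_row_enum_ring_positions infinite_graph_ring bij_betw_finite by blast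

lemma bij_betw_ring_elt: "bij_betw (ring_elt E) UNIV (graph_ring E)"
  unfolding ring_elt_def
  by (rule bij_betw_trans[OF bij_enumerate[OF infinite_ring_positions] bij_betw_almost_row_enum_ring_positions])

lemma bij_betw_ring_index: "bij_betw (ring_index E) (graph_ring E) UNIV"
  unfolding ring_index_def by (rule bij_betw_inv_into[OF bij_betw_ring_elt])

lemma ring_elt_in_graph_ring: "ring_elt E n \<in> graph_ring E"
  using bij_betw_ring_elt bij_betwE by blast

lemma ring_elt_index: "f \<in> graph_ring E \<Longrightarrow> ring_elt E (ring_index E f) = f"
  unfolding ring_index_def using bij_betw_ring_elt by (meson bij_betw_inv_into_right)

lemma ring_index_elt: "ring_index E (ring_elt E n) = n"
  unfolding ring_index_def using bij_betw_imp_inj_on[OF bij_betw_ring_elt] by (simp add: inv_into_f_f)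

lemma ring_elt_eq_iff: "ring_elt E n = ring_elt E m \<longleftrightarrow> n = m"
  by (metis ring_index_elt)

definition graph_ring_code :: "(nat \<times> nat \<Rightarrow> bool) \<Rightarrow> (nat \<times> nat \<Rightarrow> nat) \<times> (nat \<times> nat \<Rightarrow> nat)" where
  "graph_ring_code E = ((\<lambda>(n, m). ring_index E (ring_elt E n + ring_elt E m)),
                        (\<lambda>(n, m). ring_index E (ring_elt E n * ring_elt E m)))"

lemma ring_elt_code_add: "ring_elt E (fst (graph_ring_code E) (a, b)) = ring_elt E a + ring_elt E b"
  by (simp add: graph_ring_code_def ring_elt_index graph_ring_add ring_elt_in_graph_ring)

lemma ring_elt_code_mult: "ring_elt E (snd (graph_ring_code E) (a, b)) = ring_elt E a * ring_elt E b"
  by (simp add: graph_ring_code_def ring_elt_index graph_ring_mult ring_elt_in_graph_ring)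

lemma graph_ring_code_in_unital_rings: "graph_ring_code E \<in> unital_rings"
proof -
  obtain p m where code: "graph_ring_code E = (p, m)" by fastforce
  have P: "ring_elt E (p (a, b)) = ring_elt E a + ring_elt E b" for a b
    using ring_elt_code_add[of E a b] code by simp
  have M: "ring_elt E (m (a, b)) = ring_elt E a * ring_elt E b" for a b
    using ring_elt_code_mult[of E a b] code by simp
  have ring_elt_of_int: "ring_elt E (ring_index E (of_int c)) = of_int c" for c
    by (simp add: ring_elt_index graph_ring_of_int)
  have ring_elt_uminus: "ring_elt E (ring_index E (- ring_elt E a)) = - ring_elt E a" for a
    by (simp add: ring_elt_index graph_ring_uminus ring_elt_in_graph_ring)
  note eqI = ring_elt_eq_iff[of E, THEN iffD1]
  show ?thesis unfolding code unital_rings_def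
  proof (simp only: mem_Collect_eq prod.case, intro conjI allI)
    fix a b c
    show "p (p (a, b), c) = p (a, p (b, c))" "p (a, b) = p (b, a)" "m (m (a, b), c) = m (a, m (b, c))"
      "m (a, p (b, c)) = p (m (a, b), m (a, c))" "m (p (a, b), c) = p (m (a, c), m (b, c))"
      by (auto intro!: eqI simp: P M algebra_simps)
  next
    show "\<exists>z. (\<forall>a. p (z, a) = a) \<and> (\<forall>a. \<exists>b. p (a, b) = z)"
      using ring_elt_of_int[of 0] ring_elt_uminus
      by (intro exI[of _ "ring_index E 0"] conjI allI exI[of _ "ring_index E (- ring_elt E _)"])
        (auto intro!: eqI simp: P)
  next
    show "\<exists>u. \<forall>a. m (u, a) = a \<and> m (a, u) = a"
      using ring_elt_of_int[of 1]
      by (intro exI[of _ "ring_index E 1"] allI conjI) (auto intro!: eqI simp: M)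
  qed
qed

definition ring_lift :: "(nat \<times> nat \<Rightarrow> bool) \<Rightarrow> (nat \<times> nat \<Rightarrow> bool) \<Rightarrow> (nat \<Rightarrow> nat) \<Rightarrow> nat \<Rightarrow> nat" where
  "ring_lift E1 E2 \<pi> n = ring_index E2 (transport \<pi> (ring_elt E1 n))"

lemma ring_elt_ring_lift:
  "rel_preserving E1 E2 \<pi> \<Longrightarrow> ring_elt E2 (ring_lift E1 E2 \<pi> n) = transport \<pi> (ring_elt E1 n)"
  unfolding ring_lift_def rel_preserving_def
  by (blast intro: ring_elt_index transport_in_graph_ring ring_elt_in_graph_ring)

lemma graph_ring_code_ring_lift:
  assumes "rel_preserving E1 E2 \<pi>"
  shows "ring_preserving (graph_ring_code E1) (graph_ring_code E2) (ring_lift E1 E2 \<pi>)"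
proof -
  have "bij \<pi>" and iso: "\<forall>i j. E1 (i, j) \<longleftrightarrow> E2 (\<pi> i, \<pi> j)" using assms by (auto simp: rel_preserving_def)
  have "bij_betw (ring_index E2 \<circ> (transport \<pi> \<circ> ring_elt E1)) UNIV UNIV"
    by (rule bij_betw_trans[OF bij_betw_trans[OF bij_betw_ring_elt bij_betw_transport[OF \<open>bij \<pi>\<close> iso]]
      bij_betw_ring_index])
  moreover have "ring_index E2 \<circ> (transport \<pi> \<circ> ring_elt E1) = ring_lift E1 E2 \<pi>"
    by (auto simp: ring_lift_def)
  ultimately have "bij (ring_lift E1 E2 \<pi>)" by simp
  note ring_lift = ring_elt_ring_lift[OF assms]
  show ?thesis unfolding ring_preserving_def op_preserving_def
  proof (intro conjI allI \<open>bij (ring_lift E1 E2 \<pi>)\<close>)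
    fix a b
    show "ring_lift E1 E2 \<pi> (fst (graph_ring_code E1) (a, b))
        = fst (graph_ring_code E2) (ring_lift E1 E2 \<pi> a, ring_lift E1 E2 \<pi> b)"
      by (rule ring_elt_eq_iff[of E2, THEN iffD1]) (simp only: ring_lift ring_elt_code_add transport_add)
    show "ring_lift E1 E2 \<pi> (snd (graph_ring_code E1) (a, b))
        = snd (graph_ring_code E2) (ring_lift E1 E2 \<pi> a, ring_lift E1 E2 \<pi> b)"
      by (rule ring_elt_eq_iff[of E2, THEN iffD1]) (simp only: ring_lift ring_elt_code_mult transport_mult)
  qed
qed

lemma graph_ring_code_iso_is_ring_lift:
  assumes "E1 \<in> graphs" "E2 \<in> graphs"
    and iso: "ring_preserving (graph_ring_code E1) (graph_ring_code E2) \<psi>"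
  shows "\<exists>\<pi>. rel_preserving E1 E2 \<pi> \<and> \<psi> = ring_lift E1 E2 \<pi>"
proof -
  have "bij \<psi>" and add: "\<And>a b. \<psi> (fst (graph_ring_code E1) (a, b)) = fst (graph_ring_code E2) (\<psi> a, \<psi> b)"
    and mult: "\<And>a b. \<psi> (snd (graph_ring_code E1) (a, b)) = snd (graph_ring_code E2) (\<psi> a, \<psi> b)"
    using iso by (auto simp: ring_preserving_def op_preserving_def)
  define \<Phi> where "\<Phi> f = ring_elt E2 (\<psi> (ring_index E1 f))" for f
  have \<Phi>_ring_elt: "\<Phi> (ring_elt E1 n) = ring_elt E2 (\<psi> n)" for n by (simp add: \<Phi>_def ring_index_elt)
  have "graph_ring_iso E1 E2 \<Phi>"
  proof
    have "bij_betw (ring_elt E2 \<circ> (\<psi> \<circ> ring_index E1)) (graph_ring E1) (graph_ring E2)"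
      by (rule bij_betw_trans[OF bij_betw_trans[OF bij_betw_ring_index \<open>bij \<psi>\<close>] bij_betw_ring_elt])
    then show "bij_betw \<Phi> (graph_ring E1) (graph_ring E2)" by (simp add: \<Phi>_def[abs_def] comp_def)
  next
    fix f g assume "f \<in> graph_ring E1" "g \<in> graph_ring E1"
    then obtain n m where "f = ring_elt E1 n" "g = ring_elt E1 m" by (metis ring_elt_index)
    then show "\<Phi> (f + g) = \<Phi> f + \<Phi> g" "\<Phi> (f * g) = \<Phi> f * \<Phi> g"
      using \<Phi>_ring_elt add mult ring_elt_code_add ring_elt_code_mult by metis+
  qed
  then obtain \<pi> where "rel_preserving E1 E2 \<pi>" and \<pi>: "\<forall>f\<in>graph_ring E1. \<Phi> f = transport \<pi> f"
    using graph_ring_iso_is_transport assms(1,2) by blast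
  moreover have "\<psi> = ring_lift E1 E2 \<pi>"
  proof
    fix n
    have "ring_elt E2 (\<psi> n) = ring_elt E2 (ring_lift E1 E2 \<pi> n)"
      using \<pi> \<Phi>_ring_elt ring_elt_in_graph_ring ring_elt_ring_lift[OF \<open>rel_preserving E1 E2 \<pi>\<close>] by metis
    then show "\<psi> n = ring_lift E1 E2 \<pi> n" by (simp add: ring_elt_eq_iff)
  qed
  ultimately show ?thesis by blast
qed

lemma ring_lift_comp:
  assumes "rel_preserving E E \<pi>" "rel_preserving E E \<rho>"
  shows "ring_lift E E (\<pi> \<circ> \<rho>) = ring_lift E E \<pi> \<circ> ring_lift E E \<rho>"
proof
  fix n
  have "bij \<pi>" "bij \<rho>" using assms by (auto simp: rel_preserving_def)
  then show "ring_lift E E (\<pi> \<circ> \<rho>) n = (ring_lift E E \<pi> \<circ> ring_lift E E \<rho>) n"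
    by (simp add: ring_lift_def transport_comp ring_elt_ring_lift[OF assms(2), unfolded ring_lift_def])
qed

lemma ring_lift_inj:
  assumes "rel_preserving E E \<pi>" "rel_preserving E E \<rho>" "ring_lift E E \<pi> = ring_lift E E \<rho>"
  shows "\<pi> = \<rho>"
proof
  fix i
  have "bij \<pi>" "bij \<rho>" using assms by (auto simp: rel_preserving_def)
  define n where "n = ring_index E (spike (i, i))"
  have "ring_elt E n = spike (i, i)" by (simp add: n_def ring_elt_index spike_in_graph_ring)
  then have "transport \<pi> (spike (i, i)) = transport \<rho> (spike (i, i))"
    using ring_elt_ring_lift[OF assms(1), of n] ring_elt_ring_lift[OF assms(2), of n] assms(3) by simp
  then have "transport \<pi> (spike (i, i)) (\<pi> i, \<pi> i) = transport \<rho> (spike (i, i)) (\<pi> i, \<pi> i)" by simp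
  then have "inv_into UNIV \<rho> (\<pi> i) = i"
    using \<open>bij \<pi>\<close> by (simp add: transport_def spike_def bij_is_inj split: if_splits)
  then show "\<pi> i = \<rho> i" using \<open>bij \<rho>\<close> by (metis bij_inv_eq_iff)
qed

lemma pred_in_graph_ring: "Measurable.pred code_space (\<lambda>E. f \<in> graph_ring E)"
proof -
  define C where "C \<longleftrightarrow> f \<in> almost_row_functions \<and> (\<forall>i j k. f (i, j) mod 2 = f (i, k) mod 2)
    \<and> (\<forall>i j. f (i, j) mod 3 = f (j, i) mod 3)"
  have "(\<lambda>E. f \<in> graph_ring E) = (\<lambda>E. C \<and> (\<forall>i j. E (i, j) \<longrightarrow> f (i, j) mod 5 = f (j, i) mod 5))"
    by (auto simp: graph_ring_def C_def)
  moreover note [measurable] = measurable_code_space_coordinate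
  ultimately show ?thesis by simp
qed

lemma measurable_enumerate_ring_positions:
  "(\<lambda>E. enumerate (ring_positions E) k) \<in> measurable code_space (count_space UNIV)"
proof (induction k)
  case 0
  have "(\<lambda>E. enumerate (ring_positions E) 0) = (\<lambda>E. LEAST n. almost_row_enum n \<in> graph_ring E)"
    by (simp add: ring_positions_def enumerate_0)
  moreover have "(\<lambda>E. LEAST n. almost_row_enum n \<in> graph_ring E) \<in> measurable code_space (count_space UNIV)"
    by (rule measurable_Least) (rule pred_in_graph_ring)
  ultimately show ?case by simp
next
  case (Suc k)
  have "(\<lambda>E. enumerate (ring_positions E) (Suc k))
      = (\<lambda>E. LEAST n. almost_row_enum n \<in> graph_ring E \<and> enumerate (ring_positions E) k < n)"
    by (rule ext) (simp only: enumerate_Suc''[OF infinite_ring_positions], simp add: ring_positions_def)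
  moreover have "(\<lambda>E. LEAST n. almost_row_enum n \<in> graph_ring E \<and> enumerate (ring_positions E) k < n)
      \<in> measurable code_space (count_space UNIV)"
  proof (rule measurable_Least)
    fix n
    have "Measurable.pred code_space (\<lambda>E. enumerate (ring_positions E) k < n)"
      using measurable_compose[OF Suc measurable_count_space, of "\<lambda>m. m < n"] by simp
    then show "Measurable.pred code_space (\<lambda>E. almost_row_enum n \<in> graph_ring E \<and> enumerate (ring_positions E) k < n)"
      by (rule pred_intros_logic(3)[OF pred_in_graph_ring])
  qed
  ultimately show ?case by simp
qed

lemma measurable_nat_compose3:
  fixes H :: "nat \<Rightarrow> nat \<Rightarrow> nat \<Rightarrow> 'c"
  assumes "g1 \<in> measurable M (count_space UNIV)" "g2 \<in> measurable M (count_space UNIV)"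
    "g3 \<in> measurable M (count_space UNIV)"
  shows "(\<lambda>x. H (g1 x) (g2 x) (g3 x)) \<in> measurable M (count_space UNIV)"
proof -
  have "(\<lambda>x. H i j (g3 x)) \<in> measurable M (count_space UNIV)" for i j
    by (rule measurable_compose_countable[where f="\<lambda>l x. H i j l", OF _ assms(3)]) simp
  then have "(\<lambda>x. H i (g2 x) (g3 x)) \<in> measurable M (count_space UNIV)" for i
    by (rule measurable_compose_countable[where f="\<lambda>j x. H i j (g3 x)", OF _ assms(2)])
  then show ?thesis
    by (rule measurable_compose_countable[where f="\<lambda>i x. H i (g2 x) (g3 x)", OF _ assms(1)])
qed

lemma ring_index_eq_Least: "f \<in> graph_ring E \<Longrightarrow> ring_index E f = (LEAST k. ring_elt E k = f)"
  by (rule Least_equality[symmetric])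
    (auto simp: ring_elt_index ring_index_elt dest: arg_cong[where f="ring_index E"])

lemma measurable_ring_index_op:
  assumes op: "\<And>E f g. f \<in> graph_ring E \<Longrightarrow> g \<in> graph_ring E \<Longrightarrow> op f g \<in> graph_ring E"
  shows "(\<lambda>E. ring_index E (op (ring_elt E n) (ring_elt E m))) \<in> measurable code_space (count_space UNIV)"
proof -
  have "(\<lambda>E. ring_index E (op (ring_elt E n) (ring_elt E m)))
      = (\<lambda>E. LEAST k. almost_row_enum (enumerate (ring_positions E) k)
          = op (almost_row_enum (enumerate (ring_positions E) n)) (almost_row_enum (enumerate (ring_positions E) m)))"
    by (rule ext) (simp add: ring_index_eq_Least op ring_elt_in_graph_ring, simp add: ring_elt_def)
  also have "\<dots> \<in> measurable code_space (count_space UNIV)"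
    by (rule measurable_Least, rule measurable_nat_compose3
        [where H="\<lambda>i j l. almost_row_enum i = op (almost_row_enum j) (almost_row_enum l)"])
      (rule measurable_enumerate_ring_positions)+
  finally show ?thesis .
qed

lemma measurable_graph_ring_code: "graph_ring_code \<in> measurable code_space ring_code_space"
proof -
  have "(\<lambda>E. fst (graph_ring_code E)) \<in> measurable code_space code_space"
    "(\<lambda>E. snd (graph_ring_code E)) \<in> measurable code_space code_space"
    by (rule measurable_code_spaceI,
        simp add: graph_ring_code_def split_beta measurable_ring_index_op graph_ring_add graph_ring_mult)+
  then have "(\<lambda>E. (fst (graph_ring_code E), snd (graph_ring_code E))) \<in> measurable code_space ring_code_space"
    unfolding ring_code_space_def by (rule measurable_Pair)
  then show ?thesis by simp
qed

theorem spb_reduction_graph_ring: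
  "spb_reduction code_space graphs rel_preserving ring_code_space unital_rings ring_preserving graph_ring_code"
proof (rule spb_reduction_by_lift[where lift=ring_lift])
  show "graph_ring_code \<in> measurable (restrict_space code_space graphs) (restrict_space ring_code_space unital_rings)"
    by (rule measurable_restrict_space_image[OF measurable_graph_ring_code])
      (auto simp: graph_ring_code_in_unital_rings)
qed (auto intro: graph_ring_code_ring_lift graph_ring_code_iso_is_ring_lift ring_lift_comp ring_lift_inj)

theorem proposition5p8:
  shows "(\<exists>f. spb_reduction code_space graphs rel_preserving code_space partial_orders rel_preserving f)
       \<and> (\<exists>f. spb_reduction code_space graphs rel_preserving code_space semigroups op_preserving f)
       \<and> (\<exists>f. spb_reduction code_space graphs rel_preserving ring_code_space unital_rings ring_preserving f)"
  using spb_reduction_graph_poset spb_reduction_graph_semigroup spb_reduction_graph_ring by blast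

end
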